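(* Let $E$ be a finite non-abelian $p$-group of class $2$ with cyclic centre, and let $E_n,Z_n,F_n,K_n,L_n,J_n,\alpha_n$ ($n\ge0$) and the homomorphisms $\psi_n:J_n/L_n\to J_{n-1}/L_{n-1}$ ($n\ge1$) be as follows: $E_n=E^{p^n}$, $Z_n=Z(E_n)$, $F_n=\{(x^{(i)})\in Z_n:\prod_{i=1}^{p^n}x^{(i)}=1\}$, $K_n=E_n/F_n$, $L_n=Z_n/F_n$, $J_n=K_n\rtimes\langle\alpha_n\rangle$ with $\alpha_n$ of order $p^n$ cyclically shifting coordinates; $\psi_n$ is induced on $K_n/L_n\cong E_n/Z_n$ by $x\mapsto\big(\prod_{r\equiv i\ (\mathrm{mod}\ p^{n-1})}x^{(r)}\big)_{i}$ (increasing order) and sends $\alpha_n\mapsto\alpha_{n-1}$. Let $$K=\{(k_n)\in\textstyle\prod_{n\ge0}K_n:\psi_n(k_nL_n)=k_{n-1}L_{n-1}\ \forall n\ge1\},\quad L=\prod_{n\ge0}L_n,$$ let $\mathcal U$ be a non-principal ultrafilter on the index set, $D=\{(k_n)\in L:\{n:k_n\ne1\}\notin\mathcal U\}$, $H=K/D$ and $Z=L/D$. Then $Z\cong Z(E)$, and $H$ is monolithic with $Z(H)=Z$.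
   Context: A group is monolithic if the intersection of all its nontrivial normal subgroups is nontrivial. A non-principal ultrafilter is a maximal filter (family of nonempty subsets closed under finite intersections and supersets) not consisting of all supersets of a fixed set. *)

theory Defs
  imports "HOL-Algebra.Algebra" "HOL-Algebra.Product_Groups"
begin

definition center :: "('a, 'b) monoid_scheme \<Rightarrow> 'a set" where
  "center G = {z \<in> carrier G. \<forall>x \<in> carrier G. z \<otimes>\<^bsub>G\<^esub> x = x \<otimes>\<^bsub>G\<^esub> z}"

text \<open>Monolithic: the intersection of all nontrivial normal subgroups is nontrivial
  (the empty intersection being the whole group).\<close>
definition monolithic :: "('a, 'b) monoid_scheme \<Rightarrow> bool" where
  "monolithic G \<longleftrightarrow>
     carrier G \<inter> \<Inter>{N. normal N G \<and> N \<noteq> {\<one>\<^bsub>G\<^esub>}} \<noteq> {\<one>\<^bsub>G\<^esub>}"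

definition class_le_2 :: "('a, 'b) monoid_scheme \<Rightarrow> bool" where
  "class_le_2 G \<longleftrightarrow> derived G (carrier G) \<subseteq> center G"

definition p_group :: "nat \<Rightarrow> ('a, 'b) monoid_scheme \<Rightarrow> bool" where
  "p_group p G \<longleftrightarrow> Factorial_Ring.prime p \<and> finite (carrier G) \<and> (\<exists>k. card (carrier G) = p ^ k)"

definition lprod :: "('a, 'b) monoid_scheme \<Rightarrow> 'a list \<Rightarrow> 'a" where
  "lprod G xs = foldr (\<lambda>a b. a \<otimes>\<^bsub>G\<^esub> b) xs \<one>\<^bsub>G\<^esub>"

definition is_filter_on :: "'i set \<Rightarrow> 'i set set \<Rightarrow> bool" where
  "is_filter_on I F \<longleftrightarrow> F \<subseteq> Pow I \<and> F \<noteq> {} \<and> {} \<notin> F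
     \<and> (\<forall>A\<in>F. \<forall>B\<in>F. A \<inter> B \<in> F)
     \<and> (\<forall>A\<in>F. \<forall>B. A \<subseteq> B \<and> B \<subseteq> I \<longrightarrow> B \<in> F)"

definition ultrafilter_on :: "'i set \<Rightarrow> 'i set set \<Rightarrow> bool" where
  "ultrafilter_on I U \<longleftrightarrow> is_filter_on I U \<and> (\<forall>F. is_filter_on I F \<and> U \<subseteq> F \<longrightarrow> F = U)"

definition nonprincipal_on :: "'i set \<Rightarrow> 'i set set \<Rightarrow> bool" where
  "nonprincipal_on I U \<longleftrightarrow> \<not> (\<exists>S. U = {A. S \<subseteq> A \<and> A \<subseteq> I})"

text \<open>Coordinates of \<open>E^{p^n}\<close> are indexed by \<open>{0..<p^n}\<close> (the paper uses \<open>1..p^n\<close>).\<close>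
definition En :: "('a, 'b) monoid_scheme \<Rightarrow> nat \<Rightarrow> nat \<Rightarrow> (nat \<Rightarrow> 'a) monoid" where
  "En E p n = product_group {..<p ^ n} (\<lambda>_. E)"

definition Zn :: "('a, 'b) monoid_scheme \<Rightarrow> nat \<Rightarrow> nat \<Rightarrow> (nat \<Rightarrow> 'a) set" where
  "Zn E p n = center (En E p n)"

definition Fn :: "('a, 'b) monoid_scheme \<Rightarrow> nat \<Rightarrow> nat \<Rightarrow> (nat \<Rightarrow> 'a) set" where
  "Fn E p n = {x \<in> Zn E p n. lprod E (map x [0..<p ^ n]) = \<one>\<^bsub>E\<^esub>}"

definition Kn :: "('a, 'b) monoid_scheme \<Rightarrow> nat \<Rightarrow> nat \<Rightarrow> (nat \<Rightarrow> 'a) set monoid" where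
  "Kn E p n = En E p n Mod Fn E p n"

definition Ln :: "('a, 'b) monoid_scheme \<Rightarrow> nat \<Rightarrow> nat \<Rightarrow> (nat \<Rightarrow> 'a) set monoid" where
  "Ln E p n = (En E p n)\<lparr>carrier := Zn E p n\<rparr> Mod Fn E p n"

definition fold_coords :: "('a, 'b) monoid_scheme \<Rightarrow> nat \<Rightarrow> nat \<Rightarrow> (nat \<Rightarrow> 'a) \<Rightarrow> (nat \<Rightarrow> 'a)" where
  "fold_coords E p n x =
     (\<lambda>i\<in>{..<p ^ (n - 1)}. lprod E (map (\<lambda>j. x (i + j * p ^ (n - 1))) [0..<p]))"

text \<open>\<open>\<psi>_n\<close> on \<open>K_n/L_n\<close> (the part of \<open>J_n/L_n\<close> relevant to the definition of \<open>K\<close>):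
  a coset \<open>C\<close> of \<open>L_n\<close> in \<open>K_n\<close> is sent to the coset of \<open>L_{n-1}\<close> in \<open>K_{n-1}\<close> of the image
  of the folding of a representative in \<open>E_n\<close>.\<close>
definition psi :: "('a, 'b) monoid_scheme \<Rightarrow> nat \<Rightarrow> nat \<Rightarrow> (nat \<Rightarrow> 'a) set set \<Rightarrow> (nat \<Rightarrow> 'a) set set" where
  "psi E p n C =
     (let x = (SOME x. x \<in> \<Union>C)
      in carrier (Ln E p (n - 1)) #>\<^bsub>Kn E p (n - 1)\<^esub>
           (Fn E p (n - 1) #>\<^bsub>En E p (n - 1)\<^esub> fold_coords E p n x))"

definition Kprod :: "('a, 'b) monoid_scheme \<Rightarrow> nat \<Rightarrow> (nat \<Rightarrow> (nat \<Rightarrow> 'a) set) monoid" where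
  "Kprod E p = product_group UNIV (Kn E p)"

definition Kset :: "('a, 'b) monoid_scheme \<Rightarrow> nat \<Rightarrow> (nat \<Rightarrow> (nat \<Rightarrow> 'a) set) set" where
  "Kset E p = {k \<in> carrier (Kprod E p). \<forall>n\<ge>1.
      psi E p n (carrier (Ln E p n) #>\<^bsub>Kn E p n\<^esub> k n)
        = carrier (Ln E p (n - 1)) #>\<^bsub>Kn E p (n - 1)\<^esub> k (n - 1)}"

definition Lset :: "('a, 'b) monoid_scheme \<Rightarrow> nat \<Rightarrow> (nat \<Rightarrow> (nat \<Rightarrow> 'a) set) set" where
  "Lset E p = carrier (product_group UNIV (Ln E p))"

definition Dset :: "('a, 'b) monoid_scheme \<Rightarrow> nat \<Rightarrow> nat set set \<Rightarrow> (nat \<Rightarrow> (nat \<Rightarrow> 'a) set) set" where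
  "Dset E p U = {k \<in> Lset E p. {n. k n \<noteq> \<one>\<^bsub>Kn E p n\<^esub>} \<notin> U}"

definition Hgrp :: "('a, 'b) monoid_scheme \<Rightarrow> nat \<Rightarrow> nat set set \<Rightarrow> (nat \<Rightarrow> (nat \<Rightarrow> 'a) set) set monoid" where
  "Hgrp E p U = (Kprod E p)\<lparr>carrier := Kset E p\<rparr> Mod Dset E p U"

definition Zgrp :: "('a, 'b) monoid_scheme \<Rightarrow> nat \<Rightarrow> nat set set \<Rightarrow> (nat \<Rightarrow> (nat \<Rightarrow> 'a) set) set monoid" where
  "Zgrp E p U = (Kprod E p)\<lparr>carrier := Lset E p\<rparr> Mod Dset E p U"

end

(*
  K consists of the threads of the inverse system K_n/L_n = E_n/Z(E_n), lifted to the K_n. It contains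
  L = prod L_n centrally and its commutators lie in L, so H = K/D has class at most two. The product of
  the coordinates identifies each L_n with Z(E), so Z = L/D is an ultrapower of the finite group Z(E),
  that is, a copy of Z(E).

  An element of K outside L fails, from some level on, to commute with a suitable thread. Indeed a
  partner that does not commute at level n - 1 lifts through the folding map to one that does not
  commute at level n: pad it with ones; if that fails, insert a^-1 and a in two coordinates of one
  fibre on which the given element has different commutators with a; and if there is no such fibre,
  the commutator product at level n - 1 is the p-th power of the one at level n, so padding cannot
  fail. Since U contains the cofinite sets, Z(H) = Z.

  Finally, a non-trivial normal subgroup of a group of class two meets the centre non-trivially, and
  in the cyclic p-group Z(E) some element is a power of every non-trivial element, so H is monolithic.
*)

theory Submission
  imports Defs
begin

lemma lprod_Nil [simp]: "lprod G [] = \<one>\<^bsub>G\<^esub>"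
  by (simp add: lprod_def)

lemma lprod_Cons [simp]: "lprod G (a # xs) = a \<otimes>\<^bsub>G\<^esub> lprod G xs"
  by (simp add: lprod_def)

context monoid
begin

lemma lprod_closed: "set xs \<subseteq> carrier G \<Longrightarrow> lprod G xs \<in> carrier G"
  by (induction xs) auto

lemma lprod_append:
  "set xs \<subseteq> carrier G \<Longrightarrow> set ys \<subseteq> carrier G \<Longrightarrow> lprod G (xs @ ys) = lprod G xs \<otimes> lprod G ys"
  by (induction xs) (auto simp: m_assoc lprod_closed)

lemma lprod_map_one: "(\<And>j. j \<in> set xs \<Longrightarrow> f j = \<one>) \<Longrightarrow> lprod G (map f xs) = \<one>"
  by (induction xs) auto

lemma lprod_map_const: "a \<in> carrier G \<Longrightarrow> lprod G (map (\<lambda>_. a) xs) = a [^] length xs"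
  by (induction xs) (auto simp: nat_pow_mult nat_pow_Suc2[symmetric])

lemma lprod_map_single:
  assumes "distinct xs" "r \<in> set xs" "f r \<in> carrier G" "\<And>j. j \<in> set xs \<Longrightarrow> j \<noteq> r \<Longrightarrow> f j = \<one>"
  shows "lprod G (map f xs) = f r"
  using assms
proof (induction xs)
  case (Cons a xs)
  show ?case
  proof (cases "a = r")
    case True
    then have "lprod G (map f xs) = \<one>"
      using Cons.prems by (intro lprod_map_one) auto
    then show ?thesis
      using True Cons.prems by simp
  next
    case False
    then show ?thesis
      using Cons by auto
  qed
qed simp

end

lemma (in group_hom) hom_lprod:
  "set xs \<subseteq> carrier G \<Longrightarrow> h (lprod G xs) = lprod H (map h xs)"
  by (induction xs) (auto simp: G.lprod_closed)

lemma (in comm_group) lprod_map_mult: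
  "f ` set xs \<subseteq> carrier G \<Longrightarrow> g ` set xs \<subseteq> carrier G \<Longrightarrow>
   lprod G (map (\<lambda>j. f j \<otimes> g j) xs) = lprod G (map f xs) \<otimes> lprod G (map g xs)"
  by (induction xs) (auto simp: lprod_closed m_ac)

definition commutator :: "('a, 'b) monoid_scheme \<Rightarrow> 'a \<Rightarrow> 'a \<Rightarrow> 'a" where
  "commutator G a b = a \<otimes>\<^bsub>G\<^esub> b \<otimes>\<^bsub>G\<^esub> inv\<^bsub>G\<^esub> a \<otimes>\<^bsub>G\<^esub> inv\<^bsub>G\<^esub> b"

context group
begin

lemma inv_mult_cancel_left [simp]: "a \<in> carrier G \<Longrightarrow> x \<in> carrier G \<Longrightarrow> inv a \<otimes> (a \<otimes> x) = x"
  by (simp add: m_assoc[symmetric])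

lemma mult_inv_cancel_left [simp]: "a \<in> carrier G \<Longrightarrow> x \<in> carrier G \<Longrightarrow> a \<otimes> (inv a \<otimes> x) = x"
  by (simp add: m_assoc[symmetric])

lemma commutator_closed [intro, simp]:
  "a \<in> carrier G \<Longrightarrow> b \<in> carrier G \<Longrightarrow> commutator G a b \<in> carrier G"
  by (simp add: commutator_def)

lemma commutator_eq_inv_mult: 
  "a \<in> carrier G \<Longrightarrow> b \<in> carrier G \<Longrightarrow> commutator G a b = a \<otimes> b \<otimes> inv (b \<otimes> a)"
  by (simp add: commutator_def inv_mult_group m_assoc)

lemma commutator_eq_one_iff:
  "a \<in> carrier G \<Longrightarrow> b \<in> carrier G \<Longrightarrow> commutator G a b = \<one> \<longleftrightarrow> a \<otimes> b = b \<otimes> a"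
  by (metis commutator_eq_inv_mult inv_closed inv_equality inv_inv m_closed r_inv)

lemma commutator_one_right [simp]: "a \<in> carrier G \<Longrightarrow> commutator G a \<one> = \<one>"
  by (simp add: commutator_def)

lemma center_subset_carrier: "center G \<subseteq> carrier G"
  by (auto simp: center_def)

lemma center_commute: "z \<in> center G \<Longrightarrow> x \<in> carrier G \<Longrightarrow> z \<otimes> x = x \<otimes> z"
  by (simp add: center_def)

lemma centerI:
  "z \<in> carrier G \<Longrightarrow> (\<And>x. x \<in> carrier G \<Longrightarrow> z \<otimes> x = x \<otimes> z) \<Longrightarrow> z \<in> center G"
  by (simp add: center_def)

lemma center_subgroup: "subgroup (center G) G"
proof (rule subgroupI)
  fix a b assume a: "a \<in> center G" and b: "b \<in> center G"
  then have ab: "a \<in> carrier G" "b \<in> carrier G"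
    using center_subset_carrier by auto
  show "inv a \<in> center G"
  proof (rule centerI)
    fix x assume x: "x \<in> carrier G"
    have "inv a \<otimes> x \<otimes> a = inv a \<otimes> (a \<otimes> x)"
      using ab x by (simp add: m_assoc center_commute[OF a x])
    then have "inv a \<otimes> x \<otimes> a = x"
      using ab x by (simp add: m_assoc[symmetric])
    then have "inv a \<otimes> x = x \<otimes> inv a \<otimes> (a \<otimes> inv a) \<and> x \<otimes> inv a \<otimes> (a \<otimes> inv a) = x \<otimes> inv a"
      using ab x by (metis inv_closed m_assoc m_closed r_inv r_one)
    then show "inv a \<otimes> x = x \<otimes> inv a" by simp
  qed (use ab in simp)
  show "a \<otimes> b \<in> center G"
  proof (rule centerI)
    fix x assume x: "x \<in> carrier G"
    have "a \<otimes> b \<otimes> x = a \<otimes> (x \<otimes> b)"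
      using ab x by (simp add: m_assoc center_commute[OF b x])
    also have "\<dots> = x \<otimes> a \<otimes> b"
      using ab x by (simp add: m_assoc[symmetric] center_commute[OF a x])
    finally show "a \<otimes> b \<otimes> x = x \<otimes> (a \<otimes> b)"
      using ab x by (simp add: m_assoc)
  qed (use ab in simp)
qed (auto simp: center_def)

lemma central_subgroup_normal:
  assumes "subgroup H G" "H \<subseteq> center G"
  shows "H \<lhd> G"
  unfolding normal_inv_iff
proof (intro conjI assms ballI)
  fix x h assume x: "x \<in> carrier G" and h: "h \<in> H"
  then have "x \<otimes> h = h \<otimes> x" "h \<in> carrier G"
    using assms center_commute[of h x] center_subset_carrier by auto
  then have "x \<otimes> h \<otimes> inv x = h"
    using x by (simp add: m_assoc)
  then show "x \<otimes> h \<otimes> inv x \<in> H"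
    using h by simp
qed

lemma rcos_eq_iff:
  assumes "subgroup H G" "a \<in> carrier G" "b \<in> carrier G"
  shows "H #> a = H #> b \<longleftrightarrow> a \<otimes> inv b \<in> H"
proof
  assume "H #> a = H #> b"
  then have "a \<in> H #> b"
    using rcos_self[OF assms(2,1)] by simp
  then show "a \<otimes> inv b \<in> H"
    using subgroup.rcos_module_imp[OF assms(1) is_group assms(3)] by blast
next
  assume "a \<otimes> inv b \<in> H"
  then have "a \<in> H #> b"
    using subgroup.rcos_module_rev[OF assms(1) is_group assms(3,2)] by blast
  then show "H #> a = H #> b"
    using repr_independence[OF _ assms(3,1)] by simp
qed

lemma subgroup_lprod_closed:
  assumes "subgroup K G"
  shows "set xs \<subseteq> K \<Longrightarrow> lprod G xs \<in> K"
  by (induction xs) (simp_all add: subgroup.one_closed[OF assms] subgroup.m_closed[OF assms])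

lemma lprod_map_mult_central:
  assumes "f ` set xs \<subseteq> carrier G" "g ` set xs \<subseteq> center G"
  shows "lprod G (map (\<lambda>j. f j \<otimes> g j) xs) = lprod G (map f xs) \<otimes> lprod G (map g xs)"
  using assms
proof (induction xs)
  case (Cons a xs)
  let ?F = "lprod G (map f xs)" and ?G = "lprod G (map g xs)"
  have "g ` set (a # xs) \<subseteq> carrier G"
    using Cons.prems center_subset_carrier by blast
  then have c: "f a \<in> carrier G" "g a \<in> carrier G" "?F \<in> carrier G" "?G \<in> carrier G"
    using Cons.prems lprod_closed[of "map f xs"] lprod_closed[of "map g xs"] by auto
  have comm: "g a \<otimes> ?F = ?F \<otimes> g a"
    using Cons.prems c center_commute by auto
  have "lprod G (map (\<lambda>j. f j \<otimes> g j) (a # xs)) = f a \<otimes> g a \<otimes> (?F \<otimes> ?G)"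
    using Cons by simp
  also have "\<dots> = f a \<otimes> (g a \<otimes> ?F) \<otimes> ?G"
    using c by (simp add: m_assoc)
  also have "\<dots> = f a \<otimes> (?F \<otimes> g a) \<otimes> ?G"
    by (simp only: comm)
  also have "\<dots> = lprod G (map f (a # xs)) \<otimes> lprod G (map g (a # xs))"
    using c by (simp add: m_assoc)
  finally show ?case .
qed simp

lemma lprod_map_pow_central:
  assumes "f ` set xs \<subseteq> center G"
  shows "lprod G (map (\<lambda>j. f j [^] (m::nat)) xs) = lprod G (map f xs) [^] m"
  using assms
proof (induction xs)
  case (Cons a xs)
  have fa: "f a \<in> center G"
    using Cons.prems by simp
  have c: "f a \<in> carrier G" "lprod G (map f xs) \<in> carrier G"
    using Cons.prems center_subset_carrier lprod_closed[of "map f xs"] by auto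
  have "(f a \<otimes> lprod G (map f xs)) [^] m = f a [^] m \<otimes> lprod G (map f xs) [^] m"
    by (rule pow_mult_distrib[OF center_commute[OF fa c(2)] c])
  with Cons show ?case
    by simp
qed simp

lemma class_le_2_commutator_center:
  assumes "class_le_2 G" "a \<in> carrier G" "b \<in> carrier G"
  shows "commutator G a b \<in> center G"
proof -
  have "commutator G a b \<in> derived_set G (carrier G)"
    using assms(2,3) unfolding commutator_def by blast
  then have "commutator G a b \<in> derived G (carrier G)"
    unfolding derived_def by (rule generate.incl)
  then show ?thesis
    using assms(1) unfolding class_le_2_def by blast
qed

lemma nontrivial_center_if_class_le_2:
  assumes "\<not> comm_group G" "class_le_2 G"
  obtains z where "z \<in> center G" "z \<noteq> \<one>"
proof -
  obtain a b where "a \<in> carrier G" "b \<in> carrier G" "a \<otimes> b \<noteq> b \<otimes> a"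
    using assms(1) group_comm_groupI by blast
  then show ?thesis
    using that class_le_2_commutator_center[OF assms(2)] commutator_eq_one_iff by blast
qed

lemma p_group_subgroup_card:
  assumes "p_group p G" "subgroup K G"
  obtains m where "card K = p ^ m"
proof -
  obtain k where k: "order G = p ^ k"
    using assms(1) by (auto simp: p_group_def order_def)
  then have "card K dvd p ^ k"
    using lagrange[OF assms(2)] by (metis dvd_triv_right)
  then show ?thesis
    using divides_primepow_nat assms(1) that by (auto simp: p_group_def)
qed

end

lemma (in normal) group_hom_rcos_Mod: "group_hom G (G Mod H) (\<lambda>a. H #> a)"
  using r_coset_hom_Mod factorgroup_is_group is_group
  by (simp add: group_hom_def group_hom_axioms_def)

lemma prime_power_exponent:
  assumes p: "Factorial_Ring.prime (p::nat)" and not_dvd: "\<not> int (p ^ m) dvd i"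
  obtains e :: int where "int (p ^ m) dvd int (p ^ (m - 1)) - i * e"
proof -
  have "gcd (nat \<bar>i\<bar>) (p ^ m) dvd p ^ m"
    by (rule gcd_dvd2)
  then obtain t where t: "t \<le> m" "gcd (nat \<bar>i\<bar>) (p ^ m) = p ^ t"
    using divides_primepow_nat[OF p] by blast
  have "t < m"
  proof (rule ccontr)
    assume "\<not> t < m"
    then have "p ^ m dvd nat \<bar>i\<bar>"
      using t by (metis gcd_dvd1 le_antisym not_le)
    then have "int (p ^ m) dvd int (nat \<bar>i\<bar>)"
      by (simp only: int_dvd_int_iff)
    then show False
      using not_dvd by simp
  qed
  have "gcd i (int (p ^ m)) = int (gcd (nat \<bar>i\<bar>) (p ^ m))"
    by (simp only: gcd_int_def abs_of_nat nat_int)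
  also have "\<dots> = int (p ^ t)"
    by (simp only: t(2))
  finally obtain u v where uv: "u * i + v * int (p ^ m) = int (p ^ t)"
    using bezout_int[of i "int (p ^ m)"] by metis
  \<comment> \<open>Multiplying the Bezout identity \<open>u i + v p^m = p^t\<close> by \<open>p^(m-1-t)\<close> gives the exponent.\<close>
  define q where "q = int (p ^ (m - 1 - t))"
  have "int (p ^ (m - 1)) = int (p ^ t) * q"
    using \<open>t < m\<close> by (simp add: q_def flip: power_add)
  then have "int (p ^ (m - 1)) - i * (u * q) = v * q * int (p ^ m)"
    unfolding uv[symmetric] by (simp add: algebra_simps)
  then show ?thesis
    using that[of "u * q"] by simp
qed

section \<open>Monolithic groups and cyclic \<open>p\<close>-groups\<close>

context group
begin

lemma normal_meets_center_nontrivially: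
  assumes commutators_central: "\<And>a b. a \<in> carrier G \<Longrightarrow> b \<in> carrier G \<Longrightarrow> commutator G a b \<in> center G"
    and N: "N \<lhd> G" "N \<noteq> {\<one>}"
  obtains t where "t \<in> N" "t \<in> center G" "t \<noteq> \<one>"
proof -
  interpret N: subgroup N G
    using N normal_imp_subgroup by blast
  obtain u where u: "u \<in> N" "u \<noteq> \<one>"
    using N N.one_closed by blast
  then have uc: "u \<in> carrier G"
    using N.subset by blast
  show ?thesis
  proof (cases "u \<in> center G")
    case True
    then show ?thesis using u that by blast
  next
    case False
    then obtain v where v: "v \<in> carrier G" "u \<otimes> v \<noteq> v \<otimes> u"
      using uc by (auto simp: center_def)
    have "v \<otimes> inv u \<otimes> inv v \<in> N"
      using N v u unfolding normal_inv_iff by blast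
    moreover have "commutator G u v = u \<otimes> (v \<otimes> inv u \<otimes> inv v)"
      using uc v by (simp add: commutator_def m_assoc)
    ultimately have "commutator G u v \<in> N"
      using u by simp
    moreover have "commutator G u v \<noteq> \<one>"
      using uc v commutator_eq_one_iff by blast
    ultimately show ?thesis
      using commutators_central uc v that by blast
  qed
qed

lemma monolithicI_center_powers:
  assumes "\<And>a b. a \<in> carrier G \<Longrightarrow> b \<in> carrier G \<Longrightarrow> commutator G a b \<in> center G"
    and w: "w \<in> center G" "w \<noteq> \<one>"
    and powers: "\<And>c. c \<in> center G \<Longrightarrow> c \<noteq> \<one> \<Longrightarrow> \<exists>e::int. c [^] e = w"
  shows "monolithic G"
proof -
  have "w \<in> N" if N: "N \<lhd> G" "N \<noteq> {\<one>}" for N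
  proof -
    obtain t where "t \<in> N" "t \<in> center G" "t \<noteq> \<one>"
      using normal_meets_center_nontrivially[OF assms(1) N] .
    then show ?thesis
      using powers subgroup_int_pow_closed[OF normal_imp_subgroup[OF N(1)]] by metis
  qed
  then have "w \<in> carrier G \<inter> \<Inter>{N. N \<lhd> G \<and> N \<noteq> {\<one>}}"
    using w center_subset_carrier by blast
  then show ?thesis
    unfolding monolithic_def using w by blast
qed

lemma cyclic_prime_power_order_powers:
  assumes p: "Factorial_Ring.prime (p::nat)" and cyc: "cyclic_group G" and ord: "order G = p ^ m" and m: "m \<ge> 1"
  obtains w where "w \<in> carrier G" "w \<noteq> \<one>" "\<And>c. c \<in> carrier G \<Longrightarrow> c \<noteq> \<one> \<Longrightarrow> \<exists>e::int. c [^] e = w"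
proof -
  obtain a where a: "a \<in> carrier G" "subgroup_generated G {a} = G"
    using cyc unfolding cyclic_group_def by blast
  have ord_a: "ord a = p ^ m"
    using cyclic_order_is_ord[OF a(1)] a(2) ord by simp
  have gen: "carrier G = range (\<lambda>i::int. a [^] i)"
    using carrier_subgroup_generated_by_singleton[OF a(1)] a(2) by simp
  define w where "w = a [^] (p ^ (m - 1))"
  have "\<not> p ^ m dvd p ^ (m - 1)"
    using m prime_gt_1_nat[OF p] by (simp add: nat_dvd_not_less)
  then have w1: "w \<noteq> \<one>"
    using a(1) ord_a by (simp add: w_def pow_eq_id)
  have "\<exists>e::int. c [^] e = w" if c: "c \<in> carrier G" "c \<noteq> \<one>" for c
  proof -
    obtain i :: int where i: "c = a [^] i"
      using c gen by blast
    then have "\<not> int (p ^ m) dvd i"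
      using c a(1) ord_a int_pow_eq_id by simp
    then obtain e where "int (ord a) dvd int (p ^ (m - 1)) - i * e"
      using prime_power_exponent[OF p] ord_a by metis
    then have "a [^] (i * e) = a [^] int (p ^ (m - 1))"
      using int_pow_eq[OF a(1)] by blast
    moreover have "a [^] int (p ^ (m - 1)) = w"
      unfolding w_def by (rule int_pow_int)
    ultimately have "c [^] e = w"
      using a(1) i by (simp add: int_pow_pow)
    then show ?thesis ..
  qed
  then show ?thesis
    using that[of w] a(1) w1 by (simp add: w_def)
qed


lemma center_powers_of_p_group:
  assumes "p_group p G" "\<not> comm_group G" "class_le_2 G" "cyclic_group (G\<lparr>carrier := center G\<rparr>)"
  obtains w where "w \<in> center G" "w \<noteq> \<one>" "\<And>c. c \<in> center G \<Longrightarrow> c \<noteq> \<one> \<Longrightarrow> \<exists>e::int. c [^] e = w"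
proof -
  have p: "Factorial_Ring.prime p" and fin: "finite (center G)"
    using assms(1) center_subset_carrier finite_subset by (auto simp: p_group_def)
  obtain m where m: "card (center G) = p ^ m"
    by (rule p_group_subgroup_card[OF assms(1) center_subgroup])
  obtain z where z: "z \<in> center G" "z \<noteq> \<one>"
    by (rule nontrivial_center_if_class_le_2[OF assms(2,3)])
  have "card {\<one>, z} \<le> card (center G)"
    using z subgroup.one_closed[OF center_subgroup] by (intro card_mono fin) auto
  then have "m \<noteq> 0"
    using z(2) m by (cases m) auto
  then obtain w where w: "w \<in> center G" "w \<noteq> \<one>"
    "\<And>c. c \<in> center G \<Longrightarrow> c \<noteq> \<one> \<Longrightarrow> \<exists>e::int. c [^]\<^bsub>G\<lparr>carrier := center G\<rparr>\<^esub> e = w"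
    using group.cyclic_prime_power_order_powers[OF subgroup.subgroup_is_group[OF center_subgroup is_group] p assms(4), of m] m
    by (auto simp: order_def)
  have "\<exists>e::int. c [^] e = w" if "c \<in> center G" "c \<noteq> \<one>" for c
    using w(3)[OF that] int_pow_consistent[OF center_subgroup that(1)] by simp
  with w(1,2) show ?thesis
    by (rule that)
qed

end

section \<open>Non-principal ultrafilters\<close>

locale nonprincipal_ultrafilter =
  fixes U :: "'i set set"
  assumes ultrafilter: "ultrafilter_on UNIV U"
    and nonprincipal: "nonprincipal_on UNIV U"
begin

lemma filter: "is_filter_on UNIV U"
  using ultrafilter by (simp add: ultrafilter_on_def)

lemma empty_not_mem: "{} \<notin> U"
  using filter by (simp add: is_filter_on_def)

lemma Int_mem: "A \<in> U \<Longrightarrow> B \<in> U \<Longrightarrow> A \<inter> B \<in> U"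
  using filter by (simp add: is_filter_on_def)

lemma mem_mono: "A \<in> U \<Longrightarrow> A \<subseteq> B \<Longrightarrow> B \<in> U"
  using filter by (simp add: is_filter_on_def)

lemma UNIV_mem: "UNIV \<in> U"
  using filter mem_mono unfolding is_filter_on_def by blast

lemma Compl_not_mem: "A \<in> U \<Longrightarrow> - A \<notin> U"
  using Int_mem[of A "- A"] empty_not_mem by auto

text \<open>If neither \<open>A\<close> nor \<open>-A\<close> belonged to \<open>U\<close>, then \<open>A\<close> would meet every member of \<open>U\<close>,
  and \<open>U\<close> together with \<open>A\<close> would generate a larger proper filter.\<close>

lemma Compl_mem: assumes "A \<notin> U" shows "- A \<in> U"
proof (rule ccontr)
  assume "- A \<notin> U"
  then have meets: "B \<inter> A \<noteq> {}" if "B \<in> U" for B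
    using mem_mono[OF that, of "- A"] by blast
  define F where "F = {C. \<exists>B\<in>U. B \<inter> A \<subseteq> C}"
  have Int: "C1 \<inter> C2 \<in> F" if C: "C1 \<in> F" "C2 \<in> F" for C1 C2
  proof -
    obtain B1 B2 where "B1 \<in> U" "B2 \<in> U" "B1 \<inter> A \<subseteq> C1" "B2 \<inter> A \<subseteq> C2"
      using C unfolding F_def by blast
    then show ?thesis
      using Int_mem[of B1 B2] unfolding F_def by blast
  qed
  have mono: "C2 \<in> F" if "C1 \<in> F" "C1 \<subseteq> C2" for C1 C2
    using that unfolding F_def by blast
  have "{} \<notin> F" "F \<noteq> {}"
    using meets UNIV_mem unfolding F_def by blast+
  with Int mono have "is_filter_on UNIV F"
    unfolding is_filter_on_def by blast
  moreover have "U \<subseteq> F"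
    unfolding F_def by blast
  ultimately have "F = U"
    using ultrafilter unfolding ultrafilter_on_def by blast
  moreover have "A \<in> F"
    unfolding F_def using UNIV_mem by blast
  ultimately show False
    using assms by blast
qed

lemma Un_not_mem: "A \<notin> U \<Longrightarrow> B \<notin> U \<Longrightarrow> A \<union> B \<notin> U"
  using Int_mem[OF Compl_mem Compl_mem, of A B] Compl_not_mem[of "A \<union> B"] by (auto simp: Compl_Un)

lemma finite_Union_mem: "finite S \<Longrightarrow> \<Union>S \<in> U \<Longrightarrow> \<exists>A\<in>S. A \<in> U"
proof (induction S rule: finite_induct)
  case empty
  then show ?case using empty_not_mem by simp
next
  case (insert A S)
  then show ?case using Un_not_mem by auto
qed

lemma finite_not_mem:
  assumes "finite A"
  shows "A \<notin> U"
proof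
  assume "A \<in> U"
  then obtain a where a: "{a} \<in> U"
    using finite_Union_mem[of "(\<lambda>a. {a}) ` A"] assms by auto
  have "B \<in> U \<longleftrightarrow> a \<in> B" for B
    using Int_mem[OF a, of B] empty_not_mem mem_mono[OF a, of B] by (cases "a \<in> B") auto
  then have "U = {B. {a} \<subseteq> B \<and> B \<subseteq> UNIV}"
    by blast
  then show False
    using nonprincipal unfolding nonprincipal_on_def by blast
qed

lemma cofinite_mem: "finite (- A) \<Longrightarrow> A \<in> U"
  using finite_not_mem Compl_mem by fastforce

end

section \<open>Groups of nilpotency class at most two\<close>

locale class2_group = group E for E (structure) +
  assumes commutator_center: "a \<in> carrier E \<Longrightarrow> b \<in> carrier E \<Longrightarrow> commutator E a b \<in> center E"
begin

lemma commutator_mult_right: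
  assumes a: "a \<in> carrier E" and b: "b \<in> carrier E" and c: "c \<in> carrier E"
  shows "commutator E a (b \<otimes> c) = commutator E a b \<otimes> commutator E a c"
proof -
  have z: "commutator E a c \<in> center E"
    using commutator_center a c by blast
  have "commutator E a b \<otimes> commutator E a c = a \<otimes> b \<otimes> inv a \<otimes> (inv b \<otimes> commutator E a c)"
    using a b c by (simp add: commutator_def m_assoc)
  also have "\<dots> = a \<otimes> b \<otimes> inv a \<otimes> (commutator E a c \<otimes> inv b)"
    using b center_commute[OF z, of "inv b"] by simp
  also have "\<dots> = commutator E a (b \<otimes> c)"
    using a b c by (simp add: commutator_def m_assoc inv_mult_group)
  finally show ?thesis ..
qed

lemma commutator_mult_left:
  assumes a: "a \<in> carrier E" and b: "b \<in> carrier E" and c: "c \<in> carrier E"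
  shows "commutator E (a \<otimes> b) c = commutator E a c \<otimes> commutator E b c"
proof -
  have z: "commutator E b c \<in> center E"
    using commutator_center b c by blast
  have "commutator E (a \<otimes> b) c = a \<otimes> commutator E b c \<otimes> (c \<otimes> inv a \<otimes> inv c)"
    using a b c by (simp add: commutator_def m_assoc inv_mult_group)
  also have "\<dots> = commutator E b c \<otimes> a \<otimes> (c \<otimes> inv a \<otimes> inv c)"
    by (simp only: center_commute[OF z a])
  also have "\<dots> = commutator E b c \<otimes> commutator E a c"
    using a b c by (simp add: commutator_def m_assoc)
  also have "\<dots> = commutator E a c \<otimes> commutator E b c"
    using a c center_commute[OF z] by simp
  finally show ?thesis .
qed

lemma commutator_inv_right:
  assumes "a \<in> carrier E" "b \<in> carrier E"
  shows "commutator E a (inv b) = inv (commutator E a b)"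
proof (rule inv_equality[symmetric])
  have "commutator E a (inv b \<otimes> b) = commutator E a (inv b) \<otimes> commutator E a b"
    by (rule commutator_mult_right) (use assms in simp_all)
  moreover have "commutator E a (inv b \<otimes> b) = \<one>"
    using assms by (simp add: commutator_def)
  ultimately show "commutator E a (inv b) \<otimes> commutator E a b = \<one>"
    by simp
qed (use assms in simp_all)

lemma commutator_center_left: "z \<in> center E \<Longrightarrow> b \<in> carrier E \<Longrightarrow> commutator E z b = \<one>"
  using commutator_eq_one_iff center_commute center_subset_carrier by blast

lemma commutator_lprod_left:
  assumes "f ` set xs \<subseteq> carrier E" "c \<in> carrier E"
  shows "commutator E (lprod E (map f xs)) c = lprod E (map (\<lambda>j. commutator E (f j) c) xs)"
  using assms
proof (induction xs)
  case (Cons a xs)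
  then show ?case
    using commutator_mult_left[of "f a" "lprod E (map f xs)" c] lprod_closed[of "map f xs"] by auto
qed (simp add: commutator_def)

abbreviation zclass :: "'a \<Rightarrow> 'a set" where
  "zclass a \<equiv> center E #> a"

abbreviation Q where
  "Q \<equiv> E Mod center E"

lemma center_normal: "center E \<lhd> E"
  using central_subgroup_normal[OF center_subgroup] by blast

lemma Q_group: "group Q"
  by (rule normal.factorgroup_is_group[OF center_normal])

lemma zclass_hom: "group_hom E Q zclass"
  using normal.group_hom_rcos_Mod[OF center_normal] .

lemma zclass_eq_iff: "a \<in> carrier E \<Longrightarrow> b \<in> carrier E \<Longrightarrow> zclass a = zclass b \<longleftrightarrow> a \<otimes> inv b \<in> center E"
  using rcos_eq_iff[OF center_subgroup] by blast

lemma zclass_center: "z \<in> center E \<Longrightarrow> zclass z = \<one>\<^bsub>Q\<^esub>"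
  using subgroup.rcos_const[OF center_subgroup is_group] by simp

lemma commutator_zclass_left:
  assumes "a \<in> carrier E" "a' \<in> carrier E" "b \<in> carrier E" "zclass a = zclass a'"
  shows "commutator E a b = commutator E a' b"
proof -
  have z: "a \<otimes> inv a' \<in> center E"
    using zclass_eq_iff assms by blast
  then have "commutator E a b = commutator E (a \<otimes> inv a') b \<otimes> commutator E a' b"
    using assms commutator_mult_left[of "a \<otimes> inv a'" a' b] center_subset_carrier
    by (simp add: m_assoc)
  then show ?thesis
    using commutator_center_left[OF z assms(3)] assms by simp
qed

lemma Q_comm_group: "comm_group Q"
proof -
  interpret Q: group_hom E Q zclass
    by (rule zclass_hom)
  show ?thesis
  proof (unfold_locales)
    fix u v assume "u \<in> carrier Q" "v \<in> carrier Q"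
    then obtain a b where ab: "a \<in> carrier E" "b \<in> carrier E" "u = zclass a" "v = zclass b"
      by (auto simp: carrier_FactGroup)
    have "a \<otimes> b \<otimes> inv (b \<otimes> a) \<in> center E"
      using ab commutator_center[of a b] by (simp only: commutator_eq_inv_mult)
    then have "zclass (a \<otimes> b) = zclass (b \<otimes> a)"
      using ab by (metis zclass_eq_iff m_closed)
    then show "u \<otimes>\<^bsub>Q\<^esub> v = v \<otimes>\<^bsub>Q\<^esub> u"
      using ab Q.hom_mult[of a b] Q.hom_mult[of b a] by simp
  qed
qed

end

section \<open>The groups \<open>E\<^sub>n\<close>, \<open>K\<^sub>n\<close>, \<open>L\<^sub>n\<close> and the folding maps\<close>

lemma map_restrict_upt [simp]: "map (restrict f {..<N}) [0..<N] = map f [0..<N]"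
  by simp

locale tower = class2_group E for E :: "('a, 'b) monoid_scheme" (structure) +
  fixes p :: nat
  assumes p_pos: "p > 0"
begin

abbreviation "EN n \<equiv> En E p n"
abbreviation "ZN n \<equiv> Zn E p n"
abbreviation "FN n \<equiv> Fn E p n"
abbreviation "KN n \<equiv> Kn E p n"
abbreviation "LN n \<equiv> Ln E p n"
abbreviation "fld n \<equiv> fold_coords E p n"

definition coord_prod :: "nat \<Rightarrow> (nat \<Rightarrow> 'a) \<Rightarrow> 'a" where
  "coord_prod n x = lprod E (map x [0..<p ^ n])"

definition single :: "nat \<Rightarrow> nat \<Rightarrow> 'a \<Rightarrow> nat \<Rightarrow> 'a" where
  "single n r c = (\<lambda>s\<in>{..<p ^ n}. if s = r then c else \<one>)"

definition kclass :: "nat \<Rightarrow> (nat \<Rightarrow> 'a) \<Rightarrow> (nat \<Rightarrow> 'a) set" where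
  "kclass n x = FN n #>\<^bsub>EN n\<^esub> x"

lemma En_group: "group (EN n)"
  unfolding En_def by (rule product_group) (rule is_group)

lemma En_carrier: "carrier (EN n) = (\<Pi>\<^sub>E i\<in>{..<p ^ n}. carrier E)"
  by (simp add: En_def)

lemma En_mult: "x \<otimes>\<^bsub>EN n\<^esub> y = (\<lambda>i\<in>{..<p ^ n}. x i \<otimes> y i)"
  by (simp add: En_def)

lemma En_one: "\<one>\<^bsub>EN n\<^esub> = (\<lambda>i\<in>{..<p ^ n}. \<one>)"
  by (simp add: En_def)

lemma En_inv: "x \<in> carrier (EN n) \<Longrightarrow> inv\<^bsub>EN n\<^esub> x = (\<lambda>i\<in>{..<p ^ n}. inv (x i))"
  unfolding En_def by (subst inv_product_group) auto

lemma En_coord_closed: "x \<in> carrier (EN n) \<Longrightarrow> i < p ^ n \<Longrightarrow> x i \<in> carrier E"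
  by (auto simp: En_carrier)

lemma En_one_closed: "\<one>\<^bsub>EN n\<^esub> \<in> carrier (EN n)"
  by (rule monoid.one_closed[OF group.is_monoid[OF En_group]])

lemma En_mult_closed: "x \<in> carrier (EN n) \<Longrightarrow> y \<in> carrier (EN n) \<Longrightarrow> x \<otimes>\<^bsub>EN n\<^esub> y \<in> carrier (EN n)"
  by (rule monoid.m_closed[OF group.is_monoid[OF En_group]])

lemma single_closed: "c \<in> carrier E \<Longrightarrow> single n r c \<in> carrier (EN n)"
  by (auto simp: single_def En_carrier)

lemma Zn_eq: "ZN n = (\<Pi>\<^sub>E i\<in>{..<p ^ n}. center E)"
proof
  show "ZN n \<subseteq> (\<Pi>\<^sub>E i\<in>{..<p ^ n}. center E)"
  proof
    fix z assume z: "z \<in> ZN n"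
    then have zc: "z \<in> carrier (EN n)"
      by (simp add: Zn_def center_def)
    have "z i \<in> center E" if i: "i < p ^ n" for i
    proof (rule centerI)
      fix a assume a: "a \<in> carrier E"
      then have "z \<otimes>\<^bsub>EN n\<^esub> single n i a = single n i a \<otimes>\<^bsub>EN n\<^esub> z"
        using z single_closed by (simp add: Zn_def center_def)
      then have "(z \<otimes>\<^bsub>EN n\<^esub> single n i a) i = (single n i a \<otimes>\<^bsub>EN n\<^esub> z) i"
        by simp
      then show "z i \<otimes> a = a \<otimes> z i"
        using i by (simp add: En_mult single_def)
    qed (use zc i in \<open>simp add: En_coord_closed\<close>)
    then show "z \<in> (\<Pi>\<^sub>E i\<in>{..<p ^ n}. center E)"
      using zc by (auto simp: En_carrier)
  qed
next
  show "(\<Pi>\<^sub>E i\<in>{..<p ^ n}. center E) \<subseteq> ZN n"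
  proof
    fix z assume z: "z \<in> (\<Pi>\<^sub>E i\<in>{..<p ^ n}. center E)"
    then have "z \<in> carrier (EN n)"
      using center_subset_carrier by (auto simp: En_carrier)
    moreover have "z \<otimes>\<^bsub>EN n\<^esub> x = x \<otimes>\<^bsub>EN n\<^esub> z" if x: "x \<in> carrier (EN n)" for x
      unfolding En_mult
    proof (rule restrict_ext)
      fix i assume "i \<in> {..<p ^ n}"
      then show "z i \<otimes> x i = x i \<otimes> z i"
        using z x center_commute[of "z i" "x i"] by (auto simp: En_carrier)
    qed
    ultimately show "z \<in> ZN n"
      by (simp add: Zn_def center_def)
  qed
qed

lemma Zn_subgroup: "subgroup (ZN n) (EN n)"
  unfolding Zn_def by (rule group.center_subgroup[OF En_group])

lemma Zn_closed: "z \<in> ZN n \<Longrightarrow> z \<in> carrier (EN n)"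
  using subgroup.subset[OF Zn_subgroup] by blast

lemma Zn_coord: "z \<in> ZN n \<Longrightarrow> i < p ^ n \<Longrightarrow> z i \<in> center E"
  by (simp add: Zn_eq PiE_iff)

lemma single_zero_Zn: "c \<in> center E \<Longrightarrow> single n 0 c \<in> ZN n"
  unfolding Zn_eq single_def restrict_PiE_iff using subgroup.one_closed[OF center_subgroup] by simp

lemma coord_prod_group_hom: "group_hom ((EN n)\<lparr>carrier := ZN n\<rparr>) E (coord_prod n)"
proof -
  have "coord_prod n (z \<otimes>\<^bsub>EN n\<^esub> w) = coord_prod n z \<otimes> coord_prod n w"
    if z: "z \<in> ZN n" and w: "w \<in> ZN n" for z w
  proof -
    have "z ` set [0..<p ^ n] \<subseteq> carrier E" "w ` set [0..<p ^ n] \<subseteq> center E"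
      using Zn_coord[OF z] Zn_coord[OF w] center_subset_carrier by auto
    then show ?thesis
      unfolding coord_prod_def En_mult map_restrict_upt by (rule lprod_map_mult_central)
  qed
  moreover have "coord_prod n z \<in> carrier E" if "z \<in> ZN n" for z
    using Zn_coord[OF that] center_subset_carrier unfolding coord_prod_def
    by (intro lprod_closed) auto
  ultimately show ?thesis
    using subgroup.subgroup_is_group[OF Zn_subgroup En_group] is_group
    unfolding group_hom_def group_hom_axioms_def hom_def by auto
qed

lemma coord_prod_center: "z \<in> ZN n \<Longrightarrow> coord_prod n z \<in> center E"
  unfolding coord_prod_def by (rule subgroup_lprod_closed[OF center_subgroup]) (use Zn_coord in auto)

lemma coord_prod_single_zero:
  assumes c: "c \<in> carrier E"
  shows "coord_prod n (single n 0 c) = c"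
proof -
  have "lprod E (map (single n 0 c) [0..<p ^ n]) = single n 0 c 0"
    by (rule lprod_map_single) (use c p_pos in \<open>simp_all add: single_def\<close>)
  then show ?thesis
    using p_pos by (simp add: coord_prod_def single_def)
qed

lemma coord_prod_div_single_zero:
  assumes z: "z \<in> ZN n" and c: "c \<in> center E"
  shows "coord_prod n (z \<otimes>\<^bsub>EN n\<^esub> inv\<^bsub>EN n\<^esub> single n 0 c) = coord_prod n z \<otimes> inv c"
proof -
  interpret coord_prod: group_hom "(EN n)\<lparr>carrier := ZN n\<rparr>" E "coord_prod n"
    by (rule coord_prod_group_hom)
  have zs: "single n 0 c \<in> ZN n" "inv\<^bsub>EN n\<^esub> single n 0 c \<in> ZN n"
    using single_zero_Zn[OF c] subgroup.m_inv_closed[OF Zn_subgroup] by blast+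
  have "coord_prod n (inv\<^bsub>EN n\<^esub> single n 0 c) = inv c"
    using coord_prod.hom_inv[of "single n 0 c"] zs group.m_inv_consistent[OF En_group Zn_subgroup]
      coord_prod_single_zero c center_subset_carrier by auto
  then show ?thesis
    using coord_prod.hom_mult[of z "inv\<^bsub>EN n\<^esub> single n 0 c"] z zs by simp
qed

lemma single_zero_mult:
  assumes "c \<in> carrier E" "d \<in> carrier E"
  shows "single n 0 (c \<otimes> d) = single n 0 c \<otimes>\<^bsub>EN n\<^esub> single n 0 d"
  unfolding En_mult single_def
proof (rule restrict_ext)
  fix i assume "i \<in> {..<p ^ n}"
  then show "(if i = 0 then c \<otimes> d else \<one>)
      = restrict (\<lambda>s. if s = 0 then c else \<one>) {..<p ^ n} i \<otimes> restrict (\<lambda>s. if s = 0 then d else \<one>) {..<p ^ n} i"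
    using assms by simp
qed

lemma Fn_subgroup: "subgroup (FN n) (EN n)"
proof -
  have "FN n = kernel ((EN n)\<lparr>carrier := ZN n\<rparr>) E (coord_prod n)"
    by (auto simp: Fn_def kernel_def coord_prod_def)
  then show ?thesis
    using group.incl_subgroup[OF En_group Zn_subgroup group_hom.subgroup_kernel[OF coord_prod_group_hom]]
    by simp
qed

lemma Fn_normal: "FN n \<lhd> EN n"
  using group.central_subgroup_normal[OF En_group Fn_subgroup] by (auto simp: Fn_def Zn_def)

lemma Kn_group: "group (KN n)"
  unfolding Kn_def using normal.factorgroup_is_group[OF Fn_normal] .

lemma kclass_hom: "group_hom (EN n) (KN n) (kclass n)"
  unfolding Kn_def kclass_def[abs_def] using normal.group_hom_rcos_Mod[OF Fn_normal] .

lemma Kn_carrier: "carrier (KN n) = kclass n ` carrier (EN n)"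
  by (simp add: Kn_def carrier_FactGroup kclass_def[abs_def])

lemma kclass_closed: "x \<in> carrier (EN n) \<Longrightarrow> kclass n x \<in> carrier (KN n)"
  by (simp add: Kn_carrier)

lemma kclass_eq_iff:
  "x \<in> carrier (EN n) \<Longrightarrow> y \<in> carrier (EN n) \<Longrightarrow>
   kclass n x = kclass n y \<longleftrightarrow> x \<otimes>\<^bsub>EN n\<^esub> inv\<^bsub>EN n\<^esub> y \<in> FN n"
  unfolding kclass_def by (rule group.rcos_eq_iff[OF En_group Fn_subgroup])

lemma kclass_eq_one_iff:
  assumes "z \<in> ZN n"
  shows "kclass n z = \<one>\<^bsub>KN n\<^esub> \<longleftrightarrow> coord_prod n z = \<one>"
proof -
  interpret kclass: group_hom "EN n" "KN n" "kclass n"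
    by (rule kclass_hom)
  have "kclass n z = \<one>\<^bsub>KN n\<^esub> \<longleftrightarrow> z \<in> FN n"
    using kclass_eq_iff[of z n "\<one>\<^bsub>EN n\<^esub>"] Zn_closed[OF assms] by simp
  then show ?thesis
    using assms by (simp add: Fn_def coord_prod_def)
qed

lemma Ln_carrier: "carrier (LN n) = kclass n ` ZN n"
  by (simp add: Ln_def carrier_FactGroup kclass_def[abs_def])

lemma Ln_subgroup: "subgroup (carrier (LN n)) (KN n)"
  unfolding Ln_carrier by (rule group_hom.subgroup_img_is_subgroup[OF kclass_hom Zn_subgroup])

lemma kclass_mem_Ln_iff:
  assumes x: "x \<in> carrier (EN n)"
  shows "kclass n x \<in> carrier (LN n) \<longleftrightarrow> x \<in> ZN n"
proof
  interpret EN: group "EN n"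
    by (rule En_group)
  assume "kclass n x \<in> carrier (LN n)"
  then obtain z where z: "z \<in> ZN n" "kclass n x = kclass n z"
    by (auto simp: Ln_carrier)
  then have "x \<otimes>\<^bsub>EN n\<^esub> inv\<^bsub>EN n\<^esub> z \<in> ZN n"
    using kclass_eq_iff[OF x Zn_closed] by (auto simp: Fn_def)
  then have "x \<otimes>\<^bsub>EN n\<^esub> inv\<^bsub>EN n\<^esub> z \<otimes>\<^bsub>EN n\<^esub> z \<in> ZN n"
    using z subgroup.m_closed[OF Zn_subgroup] by blast
  moreover have "x \<otimes>\<^bsub>EN n\<^esub> inv\<^bsub>EN n\<^esub> z \<otimes>\<^bsub>EN n\<^esub> z = x"
    using x Zn_closed[OF z(1)] by (simp add: EN.m_assoc)
  ultimately show "x \<in> ZN n"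
    by simp
qed (simp add: Ln_carrier)

definition lclass :: "nat \<Rightarrow> (nat \<Rightarrow> 'a) \<Rightarrow> (nat \<Rightarrow> 'a) set set" where
  "lclass n x = carrier (LN n) #>\<^bsub>KN n\<^esub> kclass n x"

lemma lclass_eq_iff:
  assumes x: "x \<in> carrier (EN n)" and y: "y \<in> carrier (EN n)"
  shows "lclass n x = lclass n y \<longleftrightarrow> (\<forall>i<p ^ n. zclass (x i) = zclass (y i))"
proof -
  interpret EN: group "EN n"
    by (rule En_group)
  have xy: "x \<otimes>\<^bsub>EN n\<^esub> inv\<^bsub>EN n\<^esub> y \<in> carrier (EN n)"
    using x y by simp
  have "kclass n x \<otimes>\<^bsub>KN n\<^esub> inv\<^bsub>KN n\<^esub> kclass n y = kclass n (x \<otimes>\<^bsub>EN n\<^esub> inv\<^bsub>EN n\<^esub> y)"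
    using x y group_hom.hom_mult[OF kclass_hom] group_hom.hom_inv[OF kclass_hom] by simp
  moreover have "lclass n x = lclass n y \<longleftrightarrow> kclass n x \<otimes>\<^bsub>KN n\<^esub> inv\<^bsub>KN n\<^esub> kclass n y \<in> carrier (LN n)"
    unfolding lclass_def by (rule group.rcos_eq_iff[OF Kn_group Ln_subgroup kclass_closed[OF x] kclass_closed[OF y]])
  ultimately have "lclass n x = lclass n y \<longleftrightarrow> x \<otimes>\<^bsub>EN n\<^esub> inv\<^bsub>EN n\<^esub> y \<in> ZN n"
    using kclass_mem_Ln_iff[OF xy] by simp
  also have "\<dots> \<longleftrightarrow> (\<forall>i<p ^ n. x i \<otimes> inv (y i) \<in> center E)"
    using y by (auto simp: Zn_eq En_mult En_inv PiE_iff)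
  also have "\<dots> \<longleftrightarrow> (\<forall>i<p ^ n. zclass (x i) = zclass (y i))"
    using x y by (simp add: zclass_eq_iff En_coord_closed)
  finally show ?thesis .
qed

lemma fold_index_less:
  assumes "n \<ge> 1" "i < p ^ (n - 1)" "j < p"
  shows "i + j * p ^ (n - 1) < p ^ n"
proof -
  have "i + j * p ^ (n - 1) < Suc j * p ^ (n - 1)"
    using assms(2) by simp
  also have "\<dots> \<le> p * p ^ (n - 1)"
    using assms(3) by (intro mult_le_mono1) simp
  also have "\<dots> = p ^ n"
    using assms(1) by (simp add: power_eq_if)
  finally show ?thesis .
qed

lemma fold_index_eq_iff:
  assumes i: "i < p ^ (n - 1)"
  shows "i + j * p ^ (n - 1) = r \<longleftrightarrow> r mod p ^ (n - 1) = i \<and> j = r div p ^ (n - 1)"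
proof
  assume r: "i + j * p ^ (n - 1) = r"
  have "r mod p ^ (n - 1) = i"
    using i by (simp flip: r)
  moreover have "r div p ^ (n - 1) = j"
    using i p_pos by (simp flip: r)
  ultimately show "r mod p ^ (n - 1) = i \<and> j = r div p ^ (n - 1)"
    by simp
next
  assume "r mod p ^ (n - 1) = i \<and> j = r div p ^ (n - 1)"
  then show "i + j * p ^ (n - 1) = r"
    using mod_div_mult_eq[of r "p ^ (n - 1)"] by simp
qed

lemma fld_apply:
  "i < p ^ (n - 1) \<Longrightarrow> fld n x i = lprod E (map (\<lambda>j. x (i + j * p ^ (n - 1))) [0..<p])"
  by (simp add: fold_coords_def)

lemma fld_closed:
  assumes n: "n \<ge> 1" and x: "x \<in> carrier (EN n)"
  shows "fld n x \<in> carrier (EN (n - 1))"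
proof -
  have "lprod E (map (\<lambda>j. x (i + j * p ^ (n - 1))) [0..<p]) \<in> carrier E" if "i < p ^ (n - 1)" for i
    using En_coord_closed[OF x fold_index_less[OF n that]] by (auto intro!: lprod_closed)
  then show ?thesis
    by (simp add: fold_coords_def En_carrier)
qed

lemma zclass_fld:
  assumes n: "n \<ge> 1" and x: "x \<in> carrier (EN n)" and i: "i < p ^ (n - 1)"
  shows "zclass (fld n x i) = lprod Q (map (\<lambda>j. zclass (x (i + j * p ^ (n - 1)))) [0..<p])"
proof -
  have "set (map (\<lambda>j. x (i + j * p ^ (n - 1))) [0..<p]) \<subseteq> carrier E"
    using En_coord_closed[OF x fold_index_less[OF n i]] by auto
  then show ?thesis
    using i by (simp add: fld_apply group_hom.hom_lprod[OF zclass_hom] o_def)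
qed

lemma zclass_fld_cong:
  assumes n: "n \<ge> 1" and x: "x \<in> carrier (EN n)" and y: "y \<in> carrier (EN n)"
    and xy: "\<forall>i<p ^ n. zclass (x i) = zclass (y i)" and i: "i < p ^ (n - 1)"
  shows "zclass (fld n x i) = zclass (fld n y i)"
proof -
  have "map (\<lambda>j. zclass (x (i + j * p ^ (n - 1)))) [0..<p] = map (\<lambda>j. zclass (y (i + j * p ^ (n - 1)))) [0..<p]"
    using xy fold_index_less[OF n i] by (intro map_cong) auto
  then show ?thesis
    by (simp only: zclass_fld[OF n x i] zclass_fld[OF n y i])
qed

lemma mem_Union_lclass:
  assumes x: "x \<in> carrier (EN n)" and y: "y \<in> \<Union>(lclass n x)"
  shows "y \<in> carrier (EN n)" "lclass n y = lclass n x"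
proof -
  interpret K: group "KN n"
    by (rule Kn_group)
  obtain C where C: "C \<in> lclass n x" "y \<in> C"
    using y by blast
  have Cc: "C \<in> carrier (KN n)"
    using C(1) K.r_coset_subset_G subgroup.subset[OF Ln_subgroup] kclass_closed[OF x]
    by (auto simp: lclass_def)
  then obtain w where w: "w \<in> carrier (EN n)" "C = kclass n w"
    by (auto simp: Kn_carrier)
  have "y \<in> FN n #>\<^bsub>EN n\<^esub> w"
    using C(2) w(2) by (simp add: kclass_def)
  moreover have "FN n #>\<^bsub>EN n\<^esub> w \<subseteq> carrier (EN n)"
    by (rule monoid.r_coset_subset_G[OF group.is_monoid[OF En_group] subgroup.subset[OF Fn_subgroup] w(1)])
  ultimately have yc: "y \<in> carrier (EN n)" and kyC: "kclass n y = C"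
    using w group.repr_independence[OF En_group _ w(1) Fn_subgroup] by (auto simp: kclass_def)
  then show "y \<in> carrier (EN n)"
    by blast
  have "carrier (LN n) #>\<^bsub>KN n\<^esub> C = lclass n x"
    using K.repr_independence[OF _ kclass_closed[OF x] Ln_subgroup] C(1) by (simp add: lclass_def)
  then show "lclass n y = lclass n x"
    using kyC by (simp add: lclass_def)
qed

lemma psi_lclass:
  assumes n: "n \<ge> 1" and x: "x \<in> carrier (EN n)"
  shows "psi E p n (lclass n x) = lclass (n - 1) (fld n x)"
proof -
  define y where "y = (SOME y. y \<in> \<Union>(lclass n x))"
  have "x \<in> kclass n x"
    unfolding kclass_def by (rule group.rcos_self[OF En_group x Fn_subgroup])
  moreover have "kclass n x \<in> lclass n x"
    unfolding lclass_def by (rule group.rcos_self[OF Kn_group kclass_closed[OF x] Ln_subgroup])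
  ultimately have "\<exists>y. y \<in> \<Union>(lclass n x)"
    by (rule_tac x = x in exI) (rule UnionI)
  then have "y \<in> \<Union>(lclass n x)"
    unfolding y_def by (rule someI_ex)
  then have y: "y \<in> carrier (EN n)" "lclass n y = lclass n x"
    by (rule mem_Union_lclass[OF x])+
  then have "\<forall>i<p ^ (n - 1). zclass (fld n y i) = zclass (fld n x i)"
    using zclass_fld_cong[OF n y(1) x] lclass_eq_iff[OF y(1) x] by simp
  then have "lclass (n - 1) (fld n y) = lclass (n - 1) (fld n x)"
    using lclass_eq_iff[OF fld_closed[OF n y(1)] fld_closed[OF n x]] by simp
  moreover have "psi E p n (lclass n x) = lclass (n - 1) (fld n y)"
    unfolding psi_def Let_def y_def lclass_def kclass_def by (rule refl)
  ultimately show ?thesis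
    by simp
qed

end

section \<open>The inverse system \<open>K\<close> and its subgroup \<open>L\<close>\<close>

context tower
begin

abbreviation "KP \<equiv> Kprod E p"

lemma Kprod_group: "group KP"
  unfolding Kprod_def by (rule product_group) (rule Kn_group)

lemma Kprod_carrier: "carrier KP = (\<Pi>\<^sub>E n\<in>UNIV. carrier (KN n))"
  by (simp add: Kprod_def)

lemma Kprod_mult: "k \<otimes>\<^bsub>KP\<^esub> h = (\<lambda>n. k n \<otimes>\<^bsub>KN n\<^esub> h n)"
  by (simp add: Kprod_def restrict_UNIV)

lemma Kprod_one: "\<one>\<^bsub>KP\<^esub> = (\<lambda>n. \<one>\<^bsub>KN n\<^esub>)"
  by (simp add: Kprod_def restrict_UNIV)

lemma Kprod_inv: "k \<in> carrier KP \<Longrightarrow> inv\<^bsub>KP\<^esub> k = (\<lambda>n. inv\<^bsub>KN n\<^esub> (k n))"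
  unfolding Kprod_def by (subst inv_product_group) (auto simp: Kprod_def intro: Kn_group)

lemma Kprod_obtain_rep:
  assumes "k \<in> carrier KP"
  obtains x where "\<And>n. x n \<in> carrier (EN n)" "k = (\<lambda>n. kclass n (x n))"
proof -
  have "\<forall>n. \<exists>y. y \<in> carrier (EN n) \<and> k n = kclass n y"
    using assms by (auto simp: Kprod_carrier Kn_carrier)
  then obtain x where x: "\<And>n. x n \<in> carrier (EN n) \<and> k n = kclass n (x n)"
    by metis
  moreover have "k = (\<lambda>n. kclass n (x n))"
    using x by (intro ext) simp
  ultimately show ?thesis
    using that by blast
qed

lemma kclass_seq_closed: "(\<And>n. x n \<in> carrier (EN n)) \<Longrightarrow> (\<lambda>n. kclass n (x n)) \<in> carrier KP"
  by (simp add: Kprod_carrier PiE_UNIV_domain kclass_closed)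

lemma kclass_seq_mult:
  "(\<And>n. x n \<in> carrier (EN n)) \<Longrightarrow> (\<And>n. y n \<in> carrier (EN n)) \<Longrightarrow>
   (\<lambda>n. kclass n (x n)) \<otimes>\<^bsub>KP\<^esub> (\<lambda>n. kclass n (y n)) = (\<lambda>n. kclass n (x n \<otimes>\<^bsub>EN n\<^esub> y n))"
  by (simp add: Kprod_mult group_hom.hom_mult[OF kclass_hom])

lemma kclass_seq_inv:
  "(\<And>n. x n \<in> carrier (EN n)) \<Longrightarrow>
   inv\<^bsub>KP\<^esub> (\<lambda>n. kclass n (x n)) = (\<lambda>n. kclass n (inv\<^bsub>EN n\<^esub> x n))"
  by (simp add: Kprod_inv kclass_seq_closed group_hom.hom_inv[OF kclass_hom])

definition compatible :: "(nat \<Rightarrow> nat \<Rightarrow> 'a) \<Rightarrow> bool" where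
  "compatible x \<longleftrightarrow> (\<forall>n\<ge>1. \<forall>i<p ^ (n - 1). zclass (fld n (x n) i) = zclass (x (n - 1) i))"

lemma Kset_iff:
  assumes x: "\<And>n. x n \<in> carrier (EN n)"
  shows "(\<lambda>n. kclass n (x n)) \<in> Kset E p \<longleftrightarrow> compatible x"
proof -
  have "psi E p n (lclass n (x n)) = lclass (n - 1) (x (n - 1)) \<longleftrightarrow>
      (\<forall>i<p ^ (n - 1). zclass (fld n (x n) i) = zclass (x (n - 1) i))" if n: "n \<ge> 1" for n
    using psi_lclass[OF n x] lclass_eq_iff[OF fld_closed[OF n x] x] by simp
  moreover have "(\<lambda>n. kclass n (x n)) \<in> Kset E p \<longleftrightarrow>
      (\<forall>n\<ge>1. psi E p n (lclass n (x n)) = lclass (n - 1) (x (n - 1)))"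
    using kclass_seq_closed[OF x] by (simp add: Kset_def lclass_def)
  ultimately show ?thesis
    unfolding compatible_def by simp
qed

lemma zclass_fld_mult:
  assumes n: "n \<ge> 1" and x: "x \<in> carrier (EN n)" and y: "y \<in> carrier (EN n)" and i: "i < p ^ (n - 1)"
  shows "zclass (fld n (x \<otimes>\<^bsub>EN n\<^esub> y) i) = zclass (fld n x i) \<otimes>\<^bsub>Q\<^esub> zclass (fld n y i)"
proof -
  interpret Q: comm_group Q
    by (rule Q_comm_group)
  let ?r = "\<lambda>j. i + j * p ^ (n - 1)"
  have xy: "x \<otimes>\<^bsub>EN n\<^esub> y \<in> carrier (EN n)"
    using x y by (rule En_mult_closed)
  have c: "(\<lambda>j. zclass (z (?r j))) ` set [0..<p] \<subseteq> carrier Q" if "z \<in> carrier (EN n)" for z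
    using En_coord_closed[OF that fold_index_less[OF n i]] group_hom.hom_closed[OF zclass_hom] by auto
  have "map (\<lambda>j. zclass ((x \<otimes>\<^bsub>EN n\<^esub> y) (?r j))) [0..<p]
      = map (\<lambda>j. zclass (x (?r j)) \<otimes>\<^bsub>Q\<^esub> zclass (y (?r j))) [0..<p]"
    using x y fold_index_less[OF n i] group_hom.hom_mult[OF zclass_hom]
    by (intro map_cong) (auto simp: En_mult En_coord_closed)
  then have "zclass (fld n (x \<otimes>\<^bsub>EN n\<^esub> y) i)
      = lprod Q (map (\<lambda>j. zclass (x (?r j)) \<otimes>\<^bsub>Q\<^esub> zclass (y (?r j))) [0..<p])"
    by (simp only: zclass_fld[OF n xy i])
  also have "\<dots> = lprod Q (map (\<lambda>j. zclass (x (?r j))) [0..<p]) \<otimes>\<^bsub>Q\<^esub> lprod Q (map (\<lambda>j. zclass (y (?r j))) [0..<p])"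
    by (rule Q.lprod_map_mult[OF c[OF x] c[OF y]])
  also have "\<dots> = zclass (fld n x i) \<otimes>\<^bsub>Q\<^esub> zclass (fld n y i)"
    by (simp only: zclass_fld[OF n x i] zclass_fld[OF n y i])
  finally show ?thesis .
qed

lemma zclass_fld_one:
  assumes n: "n \<ge> 1" and i: "i < p ^ (n - 1)"
  shows "zclass (fld n \<one>\<^bsub>EN n\<^esub> i) = \<one>\<^bsub>Q\<^esub>"
proof -
  have "fld n \<one>\<^bsub>EN n\<^esub> i = \<one>"
    using i fold_index_less[OF n i] by (auto simp: fld_apply En_one intro: lprod_map_one)
  then show ?thesis
    using group_hom.hom_one[OF zclass_hom] by simp
qed

lemma zclass_fld_inv:
  assumes n: "n \<ge> 1" and x: "x \<in> carrier (EN n)" and i: "i < p ^ (n - 1)"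
  shows "zclass (fld n (inv\<^bsub>EN n\<^esub> x) i) = inv\<^bsub>Q\<^esub> zclass (fld n x i)"
proof -
  interpret Q: group Q
    using Q_comm_group comm_group.axioms(2) by blast
  interpret EN: group "EN n"
    by (rule En_group)
  have c: "zclass (fld n z i) \<in> carrier Q" if "z \<in> carrier (EN n)" for z
    using group_hom.hom_closed[OF zclass_hom] En_coord_closed[OF fld_closed[OF n that] i] by blast
  have "zclass (fld n (inv\<^bsub>EN n\<^esub> x) i) \<otimes>\<^bsub>Q\<^esub> zclass (fld n x i) = \<one>\<^bsub>Q\<^esub>"
    using zclass_fld_mult[OF n EN.inv_closed[OF x] x i] zclass_fld_one[OF n i] x by simp
  then show ?thesis
    using c x by (intro Q.inv_equality[symmetric]) simp_all
qed

lemma compatible_one: "compatible (\<lambda>n. \<one>\<^bsub>EN n\<^esub>)"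
  using zclass_fld_one group_hom.hom_one[OF zclass_hom] by (simp add: compatible_def En_one)

lemma compatible_mult:
  assumes x: "\<And>n. x n \<in> carrier (EN n)" and y: "\<And>n. y n \<in> carrier (EN n)"
    and "compatible x" "compatible y"
  shows "compatible (\<lambda>n. x n \<otimes>\<^bsub>EN n\<^esub> y n)"
  unfolding compatible_def
proof (intro allI impI)
  fix n i assume n: "n \<ge> 1" and i: "i < p ^ (n - 1)"
  then have "x (n - 1) i \<in> carrier E" "y (n - 1) i \<in> carrier E"
    using En_coord_closed x y by blast+
  then show "zclass (fld n (x n \<otimes>\<^bsub>EN n\<^esub> y n) i) = zclass ((x (n - 1) \<otimes>\<^bsub>EN (n - 1)\<^esub> y (n - 1)) i)"
    using assms(3,4) n i zclass_fld_mult[OF n x y i] group_hom.hom_mult[OF zclass_hom]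
    by (simp add: compatible_def En_mult)
qed

lemma compatible_inv:
  assumes x: "\<And>n. x n \<in> carrier (EN n)" and "compatible x"
  shows "compatible (\<lambda>n. inv\<^bsub>EN n\<^esub> x n)"
  unfolding compatible_def
proof (intro allI impI)
  fix n i assume n: "n \<ge> 1" and i: "i < p ^ (n - 1)"
  then have "x (n - 1) i \<in> carrier E"
    using En_coord_closed x by blast
  then show "zclass (fld n (inv\<^bsub>EN n\<^esub> x n) i) = zclass ((inv\<^bsub>EN (n - 1)\<^esub> x (n - 1)) i)"
    using assms(2) n i zclass_fld_inv[OF n x i] group_hom.hom_inv[OF zclass_hom]
    by (simp add: compatible_def En_inv[OF x])
qed

lemma Kset_subgroup: "subgroup (Kset E p) KP"
proof (rule group.subgroupI[OF Kprod_group])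
  show "Kset E p \<subseteq> carrier KP"
    by (auto simp: Kset_def)
  have "(\<lambda>n. kclass n \<one>\<^bsub>EN n\<^esub>) \<in> Kset E p"
    using Kset_iff[of "\<lambda>n. \<one>\<^bsub>EN n\<^esub>"] compatible_one En_one_closed by blast
  then show "Kset E p \<noteq> {}"
    by blast
next
  fix k h assume k: "k \<in> Kset E p" and h: "h \<in> Kset E p"
  obtain x where x: "\<And>n. x n \<in> carrier (EN n)" and kx: "k = (\<lambda>n. kclass n (x n))"
    using k Kprod_obtain_rep by (auto simp: Kset_def)
  obtain y where y: "\<And>n. y n \<in> carrier (EN n)" and hy: "h = (\<lambda>n. kclass n (y n))"
    using h Kprod_obtain_rep by (auto simp: Kset_def)
  have cx: "compatible x" and cy: "compatible y"
    using k h kx hy Kset_iff x y by blast+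
  show "inv\<^bsub>KP\<^esub> k \<in> Kset E p"
    using compatible_inv[OF x cx] Kset_iff[of "\<lambda>n. inv\<^bsub>EN n\<^esub> x n"] group.inv_closed[OF En_group x]
    by (simp add: kx kclass_seq_inv[OF x])
  show "k \<otimes>\<^bsub>KP\<^esub> h \<in> Kset E p"
    using compatible_mult[OF x y cx cy] Kset_iff[of "\<lambda>n. x n \<otimes>\<^bsub>EN n\<^esub> y n"] En_mult_closed[OF x y]
    by (simp add: kx hy kclass_seq_mult[OF x y])
qed

lemma Lset_subgroup: "subgroup (Lset E p) KP"
  unfolding Lset_def Kprod_def carrier_product_group
  by (subst PiE_subgroup_product_group) (auto intro: Kn_group Ln_subgroup)

lemma Lset_obtain_rep:
  assumes "l \<in> Lset E p"
  obtains z where "\<And>n. z n \<in> ZN n" "l = (\<lambda>n. kclass n (z n))"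
proof -
  have "\<forall>n. \<exists>z. z \<in> ZN n \<and> l n = kclass n z"
    using assms by (auto simp: Lset_def Ln_carrier)
  then obtain z where z: "\<And>n. z n \<in> ZN n \<and> l n = kclass n (z n)"
    by metis
  moreover have "l = (\<lambda>n. kclass n (z n))"
    using z by (intro ext) simp
  ultimately show ?thesis
    using that by blast
qed

lemma kclass_seq_mem_Lset_iff:
  "(\<And>n. x n \<in> carrier (EN n)) \<Longrightarrow> (\<lambda>n. kclass n (x n)) \<in> Lset E p \<longleftrightarrow> (\<forall>n. x n \<in> ZN n)"
  by (simp add: Lset_def PiE_UNIV_domain Pi_iff kclass_mem_Ln_iff)

lemma Lset_subset_Kset: "Lset E p \<subseteq> Kset E p"
proof
  fix l assume "l \<in> Lset E p"
  then obtain z where z: "\<And>n. z n \<in> ZN n" and lz: "l = (\<lambda>n. kclass n (z n))"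
    using Lset_obtain_rep by blast
  have "zclass (fld n (z n) i) = zclass (z (n - 1) i)" if n: "n \<ge> 1" and i: "i < p ^ (n - 1)" for n i
  proof -
    have "map (\<lambda>j. zclass (z n (i + j * p ^ (n - 1)))) [0..<p] = map (\<lambda>j. \<one>\<^bsub>Q\<^esub>) [0..<p]"
      using Zn_coord[OF z] fold_index_less[OF n i] by (intro map_cong) (auto simp: zclass_center)
    then have "zclass (fld n (z n) i) = lprod Q (map (\<lambda>j. \<one>\<^bsub>Q\<^esub>) [0..<p])"
      by (simp only: zclass_fld[OF n Zn_closed[OF z] i])
    also have "\<dots> = \<one>\<^bsub>Q\<^esub>"
      by (rule monoid.lprod_map_one[OF group.is_monoid[OF Q_group]]) simp
    finally have "zclass (fld n (z n) i) = \<one>\<^bsub>Q\<^esub>" .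
    then show ?thesis
      using Zn_coord[OF z i] zclass_center by simp
  qed
  then show "l \<in> Kset E p"
    using Kset_iff[of z] Zn_closed[OF z] by (simp add: lz compatible_def)
qed

lemma Lset_central:
  assumes l: "l \<in> Lset E p" and k: "k \<in> carrier KP"
  shows "l \<otimes>\<^bsub>KP\<^esub> k = k \<otimes>\<^bsub>KP\<^esub> l"
proof -
  obtain z where z: "\<And>n. z n \<in> ZN n" and lz: "l = (\<lambda>n. kclass n (z n))"
    using Lset_obtain_rep[OF l] by blast
  obtain x where x: "\<And>n. x n \<in> carrier (EN n)" and kx: "k = (\<lambda>n. kclass n (x n))"
    using Kprod_obtain_rep[OF k] by blast
  have "z n \<otimes>\<^bsub>EN n\<^esub> x n = x n \<otimes>\<^bsub>EN n\<^esub> z n" for n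
    using z[of n] x[of n] by (simp add: Zn_def center_def)
  then show ?thesis
    by (simp add: lz kx kclass_seq_mult[OF Zn_closed[OF z] x] kclass_seq_mult[OF x Zn_closed[OF z]])
qed

definition comm_prod :: "nat \<Rightarrow> (nat \<Rightarrow> 'a) \<Rightarrow> (nat \<Rightarrow> 'a) \<Rightarrow> 'a" where
  "comm_prod n x g = coord_prod n (\<lambda>i. commutator E (x i) (g i))"

lemma commutator_En:
  assumes "x \<in> carrier (EN n)" "g \<in> carrier (EN n)"
  shows "commutator (EN n) x g = (\<lambda>i\<in>{..<p ^ n}. commutator E (x i) (g i))"
  using assms by (auto simp: commutator_def En_mult En_inv intro!: restrict_ext)

lemma commutator_En_mem_Zn:
  assumes "x \<in> carrier (EN n)" "g \<in> carrier (EN n)"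
  shows "commutator (EN n) x g \<in> ZN n"
  using assms commutator_center by (simp add: commutator_En Zn_eq En_coord_closed)

lemma commutator_kclass:
  assumes "x \<in> carrier (EN n)" "g \<in> carrier (EN n)"
  shows "commutator (KN n) (kclass n x) (kclass n g) = kclass n (commutator (EN n) x g)"
proof -
  interpret kclass: group_hom "EN n" "KN n" "kclass n"
    by (rule kclass_hom)
  show ?thesis
    using assms by (simp add: commutator_def)
qed

lemma commutator_kclass_eq_one_iff:
  assumes x: "x \<in> carrier (EN n)" and g: "g \<in> carrier (EN n)"
  shows "commutator (KN n) (kclass n x) (kclass n g) = \<one>\<^bsub>KN n\<^esub> \<longleftrightarrow> comm_prod n x g = \<one>"
  using kclass_eq_one_iff[OF commutator_En_mem_Zn[OF x g]] x g
  by (simp add: commutator_kclass comm_prod_def coord_prod_def commutator_En)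

lemma commutator_Kprod:
  assumes "k \<in> carrier KP" "h \<in> carrier KP"
  shows "commutator KP k h = (\<lambda>n. commutator (KN n) (k n) (h n))"
proof -
  interpret K: group KP
    by (rule Kprod_group)
  show ?thesis
    using assms by (simp add: commutator_def Kprod_mult Kprod_inv)
qed

lemma commutator_Kprod_mem_Lset:
  assumes k: "k \<in> carrier KP" and h: "h \<in> carrier KP"
  shows "commutator KP k h \<in> Lset E p"
proof -
  obtain x where x: "\<And>n. x n \<in> carrier (EN n)" and kx: "k = (\<lambda>n. kclass n (x n))"
    using Kprod_obtain_rep[OF k] by blast
  obtain g where g: "\<And>n. g n \<in> carrier (EN n)" and hg: "h = (\<lambda>n. kclass n (g n))"
    using Kprod_obtain_rep[OF h] by blast
  have "commutator KP k h = (\<lambda>n. kclass n (commutator (EN n) (x n) (g n)))"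
    using k h x g by (simp add: commutator_Kprod kx hg commutator_kclass)
  then show ?thesis
    using kclass_seq_mem_Lset_iff[of "\<lambda>n. commutator (EN n) (x n) (g n)"] commutator_En_mem_Zn[OF x g]
      group.commutator_closed[OF En_group x g] by simp
qed

end

section \<open>Lifting non-commuting elements along the folding maps\<close>

context tower
begin

lemma comm_prod_mult_right:
  assumes x: "x \<in> carrier (EN n)" and u: "u \<in> carrier (EN n)" and v: "v \<in> carrier (EN n)"
  shows "comm_prod n x (u \<otimes>\<^bsub>EN n\<^esub> v) = comm_prod n x u \<otimes> comm_prod n x v"
proof -
  have "map (\<lambda>i. commutator E (x i) ((u \<otimes>\<^bsub>EN n\<^esub> v) i)) [0..<p ^ n]
      = map (\<lambda>i. commutator E (x i) (u i) \<otimes> commutator E (x i) (v i)) [0..<p ^ n]"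
    using x u v by (intro map_cong) (auto simp: En_mult En_coord_closed commutator_mult_right)
  then have "comm_prod n x (u \<otimes>\<^bsub>EN n\<^esub> v)
      = lprod E (map (\<lambda>i. commutator E (x i) (u i) \<otimes> commutator E (x i) (v i)) [0..<p ^ n])"
    by (simp only: comm_prod_def coord_prod_def)
  also have "\<dots> = comm_prod n x u \<otimes> comm_prod n x v"
    unfolding comm_prod_def coord_prod_def
    by (rule lprod_map_mult_central) (use x u v commutator_center in \<open>auto simp: En_coord_closed\<close>)
  finally show ?thesis .
qed

lemma comm_prod_single:
  assumes x: "x \<in> carrier (EN n)" and r: "r < p ^ n" and c: "c \<in> carrier E"
  shows "comm_prod n x (single n r c) = commutator E (x r) c"
proof -
  have "lprod E (map (\<lambda>i. commutator E (x i) (single n r c i)) [0..<p ^ n])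
      = commutator E (x r) (single n r c r)"
  proof (rule lprod_map_single)
    show "commutator E (x j) (single n r c j) = \<one>" if "j \<in> set [0..<p ^ n]" "j \<noteq> r" for j
      using that x by (simp add: single_def En_coord_closed)
  qed (use r x c in \<open>simp_all add: single_def En_coord_closed\<close>)
  then show ?thesis
    using r by (simp add: comm_prod_def coord_prod_def single_def)
qed

lemma fld_single:
  assumes n: "n \<ge> 1" and r: "r < p ^ n" and c: "c \<in> carrier E" and i: "i < p ^ (n - 1)"
  shows "fld n (single n r c) i = (if r mod p ^ (n - 1) = i then c else \<one>)"
proof -
  let ?P = "p ^ (n - 1)"
  have "map (\<lambda>j. single n r c (i + j * ?P)) [0..<p] = map (\<lambda>j. if i + j * ?P = r then c else \<one>) [0..<p]"
    using fold_index_less[OF n i] by (intro map_cong) (simp_all add: single_def)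
  then have "fld n (single n r c) i = lprod E (map (\<lambda>j. if i + j * ?P = r then c else \<one>) [0..<p])"
    by (simp only: fld_apply[OF i])
  also have "\<dots> = (if r mod ?P = i then c else \<one>)"
  proof (cases "r mod ?P = i")
    case True
    have "p ^ n = p * ?P"
      using n by (simp add: power_eq_if)
    then have "r div ?P < p"
      using r p_pos by (simp add: div_less_iff_less_mult mult.commute)
    then have "lprod E (map (\<lambda>j. if i + j * ?P = r then c else \<one>) [0..<p])
        = (if i + r div ?P * ?P = r then c else \<one>)"
      using fold_index_eq_iff[OF i] c by (intro lprod_map_single) auto
    then show ?thesis
      using True fold_index_eq_iff[OF i] by simp
  next
    case False
    then have "lprod E (map (\<lambda>j. if i + j * ?P = r then c else \<one>) [0..<p]) = \<one>"
      using fold_index_eq_iff[OF i] by (intro lprod_map_one) auto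
    then show ?thesis
      using False by simp
  qed
  finally show ?thesis .
qed

definition pad_one :: "nat \<Rightarrow> (nat \<Rightarrow> 'a) \<Rightarrow> nat \<Rightarrow> 'a" where
  "pad_one n g = (\<lambda>r\<in>{..<p ^ n}. if r < p ^ (n - 1) then g r else \<one>)"

lemma pad_one_closed: "g \<in> carrier (EN (n - 1)) \<Longrightarrow> pad_one n g \<in> carrier (EN n)"
  using En_coord_closed[of g "n - 1"] by (simp add: pad_one_def En_carrier restrict_PiE_iff)

lemma fld_pad_one:
  assumes n: "n \<ge> 1" and g: "g \<in> carrier (EN (n - 1))" and i: "i < p ^ (n - 1)"
  shows "fld n (pad_one n g) i = g i"
proof -
  let ?P = "p ^ (n - 1)"
  have "pad_one n g (i + j * ?P) = (if j = 0 then g i else \<one>)" if j: "j < p" for j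
  proof (cases "j = 0")
    case False
    then have "?P \<le> j * ?P"
      by simp
    then have "\<not> i + j * ?P < ?P"
      by linarith
    then show ?thesis
      using False fold_index_less[OF n i j] by (simp add: pad_one_def)
  qed (use i fold_index_less[OF n i j] in \<open>simp add: pad_one_def\<close>)
  then have "map (\<lambda>j. pad_one n g (i + j * ?P)) [0..<p] = map (\<lambda>j. if j = 0 then g i else \<one>) [0..<p]"
    by (intro map_cong) simp_all
  then have "fld n (pad_one n g) i = lprod E (map (\<lambda>j. if j = 0 then g i else \<one>) [0..<p])"
    by (simp only: fld_apply[OF i])
  also have "\<dots> = g i"
    using lprod_map_single[of "[0..<p]" 0 "\<lambda>j. if j = 0 then g i else \<one>"] p_pos En_coord_closed[OF g i]
    by simp
  finally show ?thesis .
qed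

lemma comm_prod_pad_one:
  assumes n: "n \<ge> 1" and x: "x \<in> carrier (EN n)" and g: "g \<in> carrier (EN (n - 1))"
  shows "comm_prod n x (pad_one n g) = lprod E (map (\<lambda>i. commutator E (x i) (g i)) [0..<p ^ (n - 1)])"
proof -
  let ?c = "\<lambda>i. commutator E (x i) (pad_one n g i)"
  have le: "p ^ (n - 1) \<le> p ^ n"
    using p_pos n by (simp add: power_increasing)
  then have "[0..<p ^ n] = [0..<p ^ (n - 1)] @ [p ^ (n - 1)..<p ^ n]"
    using upt_add_eq_append[of 0 "p ^ (n - 1)" "p ^ n - p ^ (n - 1)"] by simp
  moreover have c: "set (map ?c [0..<p ^ (n - 1)]) \<subseteq> carrier E" "set (map ?c [p ^ (n - 1)..<p ^ n]) \<subseteq> carrier E"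
    using x pad_one_closed[OF g] le by (auto simp: En_coord_closed)
  ultimately have "comm_prod n x (pad_one n g) = lprod E (map ?c [0..<p ^ (n - 1)]) \<otimes> lprod E (map ?c [p ^ (n - 1)..<p ^ n])"
    unfolding comm_prod_def coord_prod_def by (simp only: map_append lprod_append)
  also have "lprod E (map ?c [p ^ (n - 1)..<p ^ n]) = \<one>"
    using x by (intro lprod_map_one) (simp add: pad_one_def En_coord_closed)
  also have "map ?c [0..<p ^ (n - 1)] = map (\<lambda>i. commutator E (x i) (g i)) [0..<p ^ (n - 1)]"
    using le by (intro map_cong) (auto simp: pad_one_def)
  finally show ?thesis
    using x g le by (simp add: En_coord_closed lprod_closed image_subset_iff)
qed

lemma comm_prod_fold_eq_pow:
  assumes n: "n \<ge> 1" and x: "x \<in> carrier (EN n)" and y: "y \<in> carrier (EN (n - 1))"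
    and compat: "\<forall>i<p ^ (n - 1). zclass (fld n x i) = zclass (y i)"
    and g: "g \<in> carrier (EN (n - 1))"
    and same: "\<And>i j a. i < p ^ (n - 1) \<Longrightarrow> j < p \<Longrightarrow> a \<in> carrier E \<Longrightarrow>
      commutator E (x (i + j * p ^ (n - 1))) a = commutator E (x i) a"
  shows "comm_prod (n - 1) y g = comm_prod n x (pad_one n g) [^] p"
proof -
  let ?P = "p ^ (n - 1)"
  have ilt: "i < p ^ n" if "i < ?P" for i
    using fold_index_less[OF n that, of 0] p_pos by simp
  have yx: "commutator E (y i) (g i) = commutator E (x i) (g i) [^] p" if i: "i < ?P" for i
  proof -
    have gi: "g i \<in> carrier E"
      by (rule En_coord_closed[OF g i])
    have xs: "(\<lambda>j. x (i + j * ?P)) ` set [0..<p] \<subseteq> carrier E"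
      using En_coord_closed[OF x] fold_index_less[OF n i] by auto
    have "map (\<lambda>j. commutator E (x (i + j * ?P)) (g i)) [0..<p] = map (\<lambda>_. commutator E (x i) (g i)) [0..<p]"
      using same[OF i _ gi] by (intro map_cong) auto
    then have "commutator E (fld n x i) (g i) = lprod E (map (\<lambda>_. commutator E (x i) (g i)) [0..<p])"
      using commutator_lprod_left[OF xs gi] by (simp only: fld_apply[OF i])
    also have "\<dots> = commutator E (x i) (g i) [^] p"
      using lprod_map_const[of "commutator E (x i) (g i)" "[0..<p]"] En_coord_closed[OF x ilt[OF i]] gi
      by simp
    finally show ?thesis
      using commutator_zclass_left[of "fld n x i" "y i" "g i"] compat i gi
        En_coord_closed[OF y i] En_coord_closed[OF fld_closed[OF n x] i] by simp
  qed
  have "map (\<lambda>i. commutator E (y i) (g i)) [0..<?P] = map (\<lambda>i. commutator E (x i) (g i) [^] p) [0..<?P]"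
    using yx by (intro map_cong) auto
  then have "comm_prod (n - 1) y g = lprod E (map (\<lambda>i. commutator E (x i) (g i) [^] p) [0..<?P])"
    by (simp only: comm_prod_def coord_prod_def)
  also have "\<dots> = lprod E (map (\<lambda>i. commutator E (x i) (g i)) [0..<?P]) [^] p"
    using En_coord_closed[OF x ilt] En_coord_closed[OF g] commutator_center
    by (intro lprod_map_pow_central) auto
  also have "\<dots> = comm_prod n x (pad_one n g) [^] p"
    by (simp only: comm_prod_pad_one[OF n x g])
  finally show ?thesis .
qed

lemma zclass_fld_modification:
  assumes n: "n \<ge> 1" and g: "g \<in> carrier (EN (n - 1))"
    and i: "i < p ^ (n - 1)" and j: "j < p" and a: "a \<in> carrier E" and i': "i' < p ^ (n - 1)"
  shows "zclass (fld n (pad_one n g \<otimes>\<^bsub>EN n\<^esub> single n i (inv a) \<otimes>\<^bsub>EN n\<^esub> single n (i + j * p ^ (n - 1)) a) i')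
    = zclass (g i')"
proof -
  interpret zclass: group_hom E Q zclass
    by (rule zclass_hom)
  let ?r = "i + j * p ^ (n - 1)"
  have ilt: "i < p ^ n"
    using fold_index_less[OF n i, of 0] p_pos by simp
  have rlt: "?r < p ^ n"
    by (rule fold_index_less[OF n i j])
  have rmod: "?r mod p ^ (n - 1) = i"
    using fold_index_eq_iff[OF i, of j ?r] by simp
  have c: "pad_one n g \<in> carrier (EN n)" "single n i (inv a) \<in> carrier (EN n)" "single n ?r a \<in> carrier (EN n)"
    using pad_one_closed[OF g] single_closed a by simp_all
  have "zclass (fld n (pad_one n g \<otimes>\<^bsub>EN n\<^esub> single n i (inv a) \<otimes>\<^bsub>EN n\<^esub> single n ?r a) i')
      = zclass (fld n (pad_one n g \<otimes>\<^bsub>EN n\<^esub> single n i (inv a)) i') \<otimes>\<^bsub>Q\<^esub> zclass (fld n (single n ?r a) i')"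
    by (rule zclass_fld_mult[OF n En_mult_closed[OF c(1,2)] c(3) i'])
  also have "zclass (fld n (pad_one n g \<otimes>\<^bsub>EN n\<^esub> single n i (inv a)) i')
      = zclass (fld n (pad_one n g) i') \<otimes>\<^bsub>Q\<^esub> zclass (fld n (single n i (inv a)) i')"
    by (rule zclass_fld_mult[OF n c(1,2) i'])
  also have "zclass (fld n (pad_one n g) i') \<otimes>\<^bsub>Q\<^esub> zclass (fld n (single n i (inv a)) i')
      \<otimes>\<^bsub>Q\<^esub> zclass (fld n (single n ?r a) i')
      = zclass (g i' \<otimes> (if i = i' then inv a else \<one>) \<otimes> (if i = i' then a else \<one>))"
    using a i' En_coord_closed[OF g i'] ilt rlt rmod i
    by (simp add: fld_pad_one[OF n g i'] fld_single[OF n])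
  also have "g i' \<otimes> (if i = i' then inv a else \<one>) \<otimes> (if i = i' then a else \<one>) = g i'"
    using a En_coord_closed[OF g i'] by (simp add: m_assoc)
  finally show ?thesis .
qed

lemma exists_noncommuting_modification:
  assumes n: "n \<ge> 1" and x: "x \<in> carrier (EN n)" and g: "g \<in> carrier (EN (n - 1))"
    and trivial: "comm_prod n x (pad_one n g) = \<one>"
    and i: "i < p ^ (n - 1)" and j: "j < p" and a: "a \<in> carrier E"
    and ne: "commutator E (x (i + j * p ^ (n - 1))) a \<noteq> commutator E (x i) a"
  obtains g' where "g' \<in> carrier (EN n)" "\<forall>i<p ^ (n - 1). zclass (fld n g' i) = zclass (g i)"
    "comm_prod n x g' \<noteq> \<one>"
proof -
  let ?r = "i + j * p ^ (n - 1)"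
  have ilt: "i < p ^ n"
    using fold_index_less[OF n i, of 0] p_pos by simp
  have rlt: "?r < p ^ n"
    by (rule fold_index_less[OF n i j])
  have c: "pad_one n g \<in> carrier (EN n)" "single n i (inv a) \<in> carrier (EN n)" "single n ?r a \<in> carrier (EN n)"
    using pad_one_closed[OF g] single_closed a by simp_all
  define g' where "g' = pad_one n g \<otimes>\<^bsub>EN n\<^esub> single n i (inv a) \<otimes>\<^bsub>EN n\<^esub> single n ?r a"
  have "g' \<in> carrier (EN n)"
    unfolding g'_def using c by (intro En_mult_closed)
  moreover have "\<forall>i'<p ^ (n - 1). zclass (fld n g' i') = zclass (g i')"
    unfolding g'_def using zclass_fld_modification[OF n g i j a] by blast
  moreover have "comm_prod n x g' = inv (commutator E (x i) a) \<otimes> commutator E (x ?r) a"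
    unfolding g'_def using c x a ilt rlt trivial
    by (simp add: comm_prod_mult_right En_mult_closed comm_prod_single commutator_inv_right En_coord_closed)
  moreover have "inv (commutator E (x i) a) \<otimes> commutator E (x ?r) a \<noteq> \<one>"
    using ne x a ilt rlt by (simp add: En_coord_closed inv_solve_left' flip: inv_equality)
  ultimately show ?thesis
    using that by simp
qed

lemma exists_noncommuting_lift:
  assumes n: "n \<ge> 1" and x: "x \<in> carrier (EN n)" and y: "y \<in> carrier (EN (n - 1))"
    and compat: "\<forall>i<p ^ (n - 1). zclass (fld n x i) = zclass (y i)"
    and g: "g \<in> carrier (EN (n - 1))" and ne: "comm_prod (n - 1) y g \<noteq> \<one>"
  shows "\<exists>g'\<in>carrier (EN n). (\<forall>i<p ^ (n - 1). zclass (fld n g' i) = zclass (g i)) \<and> comm_prod n x g' \<noteq> \<one>"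
proof (cases "comm_prod n x (pad_one n g) = \<one>")
  case False
  moreover have "\<forall>i<p ^ (n - 1). zclass (fld n (pad_one n g) i) = zclass (g i)"
    using fld_pad_one[OF n g] by simp
  ultimately show ?thesis
    using pad_one_closed[OF g] by blast
next
  case trivial: True
  show ?thesis
  proof (cases "\<exists>i<p ^ (n - 1). \<exists>j<p. \<exists>a\<in>carrier E.
      commutator E (x (i + j * p ^ (n - 1))) a \<noteq> commutator E (x i) a")
    case True
    then obtain i j a where "i < p ^ (n - 1)" "j < p" "a \<in> carrier E"
      "commutator E (x (i + j * p ^ (n - 1))) a \<noteq> commutator E (x i) a"
      by blast
    then obtain g' where "g' \<in> carrier (EN n)" "\<forall>i<p ^ (n - 1). zclass (fld n g' i) = zclass (g i)"
      "comm_prod n x g' \<noteq> \<one>"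
      by (rule exists_noncommuting_modification[OF n x g trivial])
    then show ?thesis
      by blast
  next
    case False
    then have "commutator E (x (i + j * p ^ (n - 1))) a = commutator E (x i) a"
      if "i < p ^ (n - 1)" "j < p" "a \<in> carrier E" for i j a
      using that by blast
    then have "comm_prod (n - 1) y g = comm_prod n x (pad_one n g) [^] p"
      by (rule comm_prod_fold_eq_pow[OF n x y compat g])
    then have "comm_prod (n - 1) y g = \<one>"
      using trivial by simp
    with ne show ?thesis
      by contradiction
  qed
qed

lemma exists_lifting_sequence:
  fixes P :: "nat \<Rightarrow> (nat \<Rightarrow> 'a) \<Rightarrow> bool"
  assumes g0: "g0 \<in> carrier (EN n0)" and P0: "P n0 g0"
    and step: "\<And>n h. n \<ge> 1 \<Longrightarrow> h \<in> carrier (EN (n - 1)) \<Longrightarrow> P (n - 1) h \<Longrightarrow>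
      \<exists>h'\<in>carrier (EN n). (\<forall>i<p ^ (n - 1). zclass (fld n h' i) = zclass (h i)) \<and> P n h'"
  obtains u where "u 0 = g0" "\<And>t. u t \<in> carrier (EN (n0 + t)) \<and> P (n0 + t) (u t)"
    "\<And>t i. i < p ^ (n0 + t) \<Longrightarrow> zclass (fld (n0 + Suc t) (u (Suc t)) i) = zclass (u t i)"
proof -
  define lift where "lift n h = (SOME h'. h' \<in> carrier (EN n) \<and>
    (\<forall>i<p ^ (n - 1). zclass (fld n h' i) = zclass (h i)) \<and> P n h')" for n h
  have lift: "lift n h \<in> carrier (EN n) \<and> (\<forall>i<p ^ (n - 1). zclass (fld n (lift n h) i) = zclass (h i))
      \<and> P n (lift n h)" if "n \<ge> 1" "h \<in> carrier (EN (n - 1))" "P (n - 1) h" for n h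
  proof -
    have "\<exists>h'. h' \<in> carrier (EN n) \<and> (\<forall>i<p ^ (n - 1). zclass (fld n h' i) = zclass (h i)) \<and> P n h'"
      using step[OF that] by blast
    then show ?thesis
      unfolding lift_def by (rule someI_ex)
  qed
  define u where "u = rec_nat g0 (\<lambda>t h. lift (n0 + Suc t) h)"
  have u_simps: "u 0 = g0" "u (Suc t) = lift (n0 + Suc t) (u t)" for t
    by (simp_all add: u_def)
  have u: "u t \<in> carrier (EN (n0 + t)) \<and> P (n0 + t) (u t)" for t
  proof (induction t)
    case (Suc t)
    then show ?case
      using lift[of "n0 + Suc t" "u t"] by (simp add: u_simps)
  qed (simp add: u_simps g0 P0)
  show ?thesis
  proof (rule that[OF u_simps(1) u])
    show "zclass (fld (n0 + Suc t) (u (Suc t)) i) = zclass (u t i)" if "i < p ^ (n0 + t)" for t i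
      using lift[of "n0 + Suc t" "u t"] u[of t] that by (simp add: u_simps)
  qed
qed

lemma exists_compatible_extension:
  fixes P :: "nat \<Rightarrow> (nat \<Rightarrow> 'a) \<Rightarrow> bool"
  assumes g0: "g0 \<in> carrier (EN n0)" and P0: "P n0 g0"
    and step: "\<And>n h. n \<ge> 1 \<Longrightarrow> h \<in> carrier (EN (n - 1)) \<Longrightarrow> P (n - 1) h \<Longrightarrow>
      \<exists>h'\<in>carrier (EN n). (\<forall>i<p ^ (n - 1). zclass (fld n h' i) = zclass (h i)) \<and> P n h'"
  obtains g where "\<And>n. g n \<in> carrier (EN n)" "compatible g" "\<And>n. n \<ge> n0 \<Longrightarrow> P n (g n)"
proof -
  obtain u where u0: "u 0 = g0" and u: "\<And>t. u t \<in> carrier (EN (n0 + t)) \<and> P (n0 + t) (u t)"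
    and u_lifts: "\<And>t i. i < p ^ (n0 + t) \<Longrightarrow> zclass (fld (n0 + Suc t) (u (Suc t)) i) = zclass (u t i)"
    using exists_lifting_sequence[OF g0 P0 step] by blast
  define down where "down = rec_nat g0 (\<lambda>t h. fld (n0 - t) h)"
  have down_simps: "down 0 = g0" "down (Suc t) = fld (n0 - t) (down t)" for t
    by (simp_all add: down_def)
  have down: "down t \<in> carrier (EN (n0 - t))" if "t \<le> n0" for t
    using that
  proof (induction t)
    case (Suc t)
    then have "fld (n0 - t) (down t) \<in> carrier (EN (n0 - t - 1))"
      by (intro fld_closed) simp_all
    then show ?case
      by (simp add: down_simps)
  qed (simp add: down_simps g0)
  define g where "g n = (if n \<le> n0 then down (n0 - n) else u (n - n0))" for n
  have g_up: "g (n0 + t) = u t" for t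
    by (cases t) (simp_all add: g_def u0 down_simps)
  show ?thesis
  proof
    show "g n \<in> carrier (EN n)" for n
      using down[of "n0 - n"] u[of "n - n0"] by (cases "n \<le> n0") (simp_all add: g_def)
    show "P n (g n)" if "n \<ge> n0" for n
      using u[of "n - n0"] g_up[of "n - n0"] that by simp
    show "compatible g"
      unfolding compatible_def
    proof (intro allI impI)
      fix n i assume n: "n \<ge> 1" and i: "i < p ^ (n - 1)"
      show "zclass (fld n (g n) i) = zclass (g (n - 1) i)"
      proof (cases "n \<le> n0")
        case True
        then have "n0 - (n - 1) = Suc (n0 - n)" "n0 - (n0 - n) = n" "n - 1 \<le> n0"
          using n by simp_all
        then show ?thesis
          using True by (simp add: g_def down_simps)
      next
        case False
        define t where "t = n - Suc n0"
        then have "n = n0 + Suc t"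
          using False by simp
        then show ?thesis
          using u_lifts[of i t] g_up[of "Suc t"] g_up[of t] i by simp
      qed
    qed
  qed
qed

lemma exists_compatible_noncommuting:
  assumes x: "\<And>n. x n \<in> carrier (EN n)" and cx: "compatible x" and n0: "x n0 \<notin> ZN n0"
  obtains g where "\<And>n. g n \<in> carrier (EN n)" "compatible g"
    "\<And>n. n \<ge> n0 \<Longrightarrow> comm_prod n (x n) (g n) \<noteq> \<one>"
proof -
  have "\<not> (\<forall>i<p ^ n0. x n0 i \<in> center E)"
  proof
    assume "\<forall>i<p ^ n0. x n0 i \<in> center E"
    then have "x n0 \<in> (\<Pi>\<^sub>E i\<in>{..<p ^ n0}. center E)"
      using x[of n0] by (simp add: En_carrier PiE_iff)
    with n0 show False
      by (simp add: Zn_eq)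
  qed
  then obtain i0 where i0: "i0 < p ^ n0" "x n0 i0 \<notin> center E"
    by blast
  have xi0: "x n0 i0 \<in> carrier E"
    by (rule En_coord_closed[OF x i0(1)])
  have "\<not> (\<forall>b\<in>carrier E. commutator E (x n0 i0) b = \<one>)"
  proof
    assume "\<forall>b\<in>carrier E. commutator E (x n0 i0) b = \<one>"
    then have "x n0 i0 \<in> center E"
      using xi0 commutator_eq_one_iff by (intro centerI) simp_all
    with i0(2) show False ..
  qed
  then obtain b where b: "b \<in> carrier E" "commutator E (x n0 i0) b \<noteq> \<one>"
    by blast
  have "comm_prod n0 (x n0) (single n0 i0 b) \<noteq> \<one>"
    using comm_prod_single[OF x i0(1) b(1)] b(2) by simp
  moreover have "\<exists>h'\<in>carrier (EN n). (\<forall>i<p ^ (n - 1). zclass (fld n h' i) = zclass (h i))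
      \<and> comm_prod n (x n) h' \<noteq> \<one>"
    if "n \<ge> 1" "h \<in> carrier (EN (n - 1))" "comm_prod (n - 1) (x (n - 1)) h \<noteq> \<one>" for n h
    using cx that by (intro exists_noncommuting_lift[OF that(1) x x]) (simp_all add: compatible_def)
  ultimately obtain g where "\<And>n. g n \<in> carrier (EN n)" "compatible g"
    "\<And>n. n \<ge> n0 \<Longrightarrow> comm_prod n (x n) (g n) \<noteq> \<one>"
    using exists_compatible_extension[OF single_closed[OF b(1)], where P = "\<lambda>n h. comm_prod n (x n) h \<noteq> \<one>"]
    by blast
  then show ?thesis
    by (rule that)
qed

end

section \<open>The group \<open>H = K/D\<close> and its centre\<close>

locale tower_ultrapower = tower E p + nonprincipal_ultrafilter U
  for E :: "('a, 'b) monoid_scheme" (structure) and p :: nat and U :: "nat set set"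
begin

abbreviation "KS \<equiv> KP\<lparr>carrier := Kset E p\<rparr>"
abbreviation "D \<equiv> Dset E p U"
abbreviation "H \<equiv> Hgrp E p U"

definition support :: "(nat \<Rightarrow> (nat \<Rightarrow> 'a) set) \<Rightarrow> nat set" where
  "support k = {n. k n \<noteq> \<one>\<^bsub>KN n\<^esub>}"

definition hclass :: "(nat \<Rightarrow> (nat \<Rightarrow> 'a) set) \<Rightarrow> (nat \<Rightarrow> (nat \<Rightarrow> 'a) set) set" where
  "hclass k = D #>\<^bsub>KP\<^esub> k"

lemma Dset_iff: "k \<in> D \<longleftrightarrow> k \<in> Lset E p \<and> support k \<notin> U"
  by (simp add: Dset_def support_def)

lemma support_mult:
  assumes "k \<in> carrier KP" "h \<in> carrier KP"
  shows "support (k \<otimes>\<^bsub>KP\<^esub> h) \<subseteq> support k \<union> support h"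
proof
  fix n assume n: "n \<in> support (k \<otimes>\<^bsub>KP\<^esub> h)"
  show "n \<in> support k \<union> support h"
  proof (rule ccontr)
    assume "n \<notin> support k \<union> support h"
    then have "(k \<otimes>\<^bsub>KP\<^esub> h) n = \<one>\<^bsub>KN n\<^esub> \<otimes>\<^bsub>KN n\<^esub> \<one>\<^bsub>KN n\<^esub>"
      by (simp add: support_def Kprod_mult)
    with n show False
      by (simp add: support_def group.is_monoid[OF Kn_group])
  qed
qed

lemma support_inv:
  assumes "k \<in> carrier KP"
  shows "support (inv\<^bsub>KP\<^esub> k) = support k"
proof -
  have "k n \<in> carrier (KN n)" for n
    using assms by (simp add: Kprod_carrier PiE_UNIV_domain Pi_iff)
  then show ?thesis
    using assms group.inv_eq_1_iff[OF Kn_group] by (simp add: support_def Kprod_inv)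
qed

lemma Dset_subgroup: "subgroup D KP"
proof (rule group.subgroupI[OF Kprod_group])
  interpret L: subgroup "Lset E p" KP
    by (rule Lset_subgroup)
  show "D \<subseteq> carrier KP"
    using L.subset by (auto simp: Dset_iff)
  have "support \<one>\<^bsub>KP\<^esub> = {}"
    by (simp add: support_def Kprod_one)
  then have "\<one>\<^bsub>KP\<^esub> \<in> D"
    using empty_not_mem L.one_closed by (simp add: Dset_iff)
  then show "D \<noteq> {}"
    by blast
  fix k h assume k: "k \<in> D" and h: "h \<in> D"
  then have c: "k \<in> carrier KP" "h \<in> carrier KP"
    using L.subset by (auto simp: Dset_iff)
  show "inv\<^bsub>KP\<^esub> k \<in> D"
    using k c support_inv by (simp add: Dset_iff)
  have "support k \<union> support h \<notin> U"
    using k h Un_not_mem by (simp add: Dset_iff)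
  then have "support (k \<otimes>\<^bsub>KP\<^esub> h) \<notin> U"
    using mem_mono support_mult[OF c] by blast
  then show "k \<otimes>\<^bsub>KP\<^esub> h \<in> D"
    using k h by (simp add: Dset_iff)
qed

lemma KS_group: "group KS"
  by (rule subgroup.subgroup_is_group[OF Kset_subgroup Kprod_group])

lemma Dset_subset_Kset: "D \<subseteq> Kset E p"
  using Lset_subset_Kset by (auto simp: Dset_iff)

lemma Dset_subgroup_KS: "subgroup D KS"
  by (rule group.subgroup_incl[OF Kprod_group Dset_subgroup Kset_subgroup Dset_subset_Kset])

lemma Dset_normal: "D \<lhd> KS"
proof (rule group.central_subgroup_normal[OF KS_group Dset_subgroup_KS])
  show "D \<subseteq> center KS"
  proof
    fix d assume d: "d \<in> D"
    then have "d \<in> Lset E p"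
      by (simp add: Dset_iff)
    then show "d \<in> center KS"
      using d Dset_subset_Kset Lset_central subgroup.subset[OF Kset_subgroup]
      by (auto simp: center_def)
  qed
qed

lemma Hgrp_group: "group H"
  unfolding Hgrp_def by (rule normal.factorgroup_is_group[OF Dset_normal])

lemma hclass_hom: "group_hom KS H hclass"
  using normal.group_hom_rcos_Mod[OF Dset_normal] by (simp add: Hgrp_def hclass_def[abs_def])

lemma Hgrp_carrier: "carrier H = hclass ` Kset E p"
  by (simp add: Hgrp_def carrier_FactGroup hclass_def[abs_def])

lemma hclass_eq_one_iff:
  assumes k: "k \<in> Kset E p"
  shows "hclass k = \<one>\<^bsub>H\<^esub> \<longleftrightarrow> k \<in> D"
proof -
  interpret KP: group KP
    by (rule Kprod_group)
  have kc: "k \<in> carrier KP"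
    using k subgroup.subset[OF Kset_subgroup] by blast
  have "D #>\<^bsub>KP\<^esub> \<one>\<^bsub>KP\<^esub> = D"
    using subgroup.subset[OF Dset_subgroup] by simp
  then show ?thesis
    using KP.rcos_eq_iff[OF Dset_subgroup kc KP.one_closed] kc by (simp add: hclass_def Hgrp_def)
qed

lemma hclass_mult: "k \<in> Kset E p \<Longrightarrow> h \<in> Kset E p \<Longrightarrow> hclass (k \<otimes>\<^bsub>KP\<^esub> h) = hclass k \<otimes>\<^bsub>H\<^esub> hclass h"
  using group_hom.hom_mult[OF hclass_hom, of k h] by simp

lemma hclass_inv: "k \<in> Kset E p \<Longrightarrow> hclass (inv\<^bsub>KP\<^esub> k) = inv\<^bsub>H\<^esub> hclass k"
  using group_hom.hom_inv[OF hclass_hom, of k] group.m_inv_consistent[OF Kprod_group Kset_subgroup, of k]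
  by simp

lemma commutator_hclass:
  assumes "k \<in> Kset E p" "h \<in> Kset E p"
  shows "commutator H (hclass k) (hclass h) = hclass (commutator KP k h)"
  using assms subgroup.m_closed[OF Kset_subgroup] subgroup.m_inv_closed[OF Kset_subgroup]
  by (simp add: commutator_def hclass_mult hclass_inv)

lemma Zgrp_carrier: "carrier (Zgrp E p U) = hclass ` Lset E p"
  by (simp add: Zgrp_def carrier_FactGroup hclass_def[abs_def])

lemma Zgrp_eq: "Zgrp E p U = H\<lparr>carrier := hclass ` Lset E p\<rparr>"
  by (simp add: Zgrp_def Hgrp_def FactGroup_def RCOSETS_def set_mult_def[abs_def] hclass_def
      UNION_singleton_eq_range)

lemma hclass_Lset_central:
  assumes l: "l \<in> Lset E p"
  shows "hclass l \<in> center H"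
proof (rule group.centerI[OF Hgrp_group])
  have lK: "l \<in> Kset E p"
    using l Lset_subset_Kset by blast
  then show "hclass l \<in> carrier H"
    by (simp add: Hgrp_carrier)
  fix c assume "c \<in> carrier H"
  then obtain k where k: "k \<in> Kset E p" "c = hclass k"
    by (auto simp: Hgrp_carrier)
  then have "l \<otimes>\<^bsub>KP\<^esub> k = k \<otimes>\<^bsub>KP\<^esub> l"
    using Lset_central[OF l] subgroup.subset[OF Kset_subgroup] by blast
  then show "hclass l \<otimes>\<^bsub>H\<^esub> c = c \<otimes>\<^bsub>H\<^esub> hclass l"
    using k lK by (simp flip: hclass_mult)
qed

lemma hclass_not_central:
  assumes k: "k \<in> Kset E p" "k \<notin> Lset E p"
  shows "hclass k \<notin> center H"
proof
  assume central: "hclass k \<in> center H"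
  obtain x where x: "\<And>n. x n \<in> carrier (EN n)" and kx: "k = (\<lambda>n. kclass n (x n))"
    using k(1) Kprod_obtain_rep subgroup.subset[OF Kset_subgroup] by blast
  have cx: "compatible x"
    using k(1) Kset_iff[OF x] kx by simp
  obtain n0 where n0: "x n0 \<notin> ZN n0"
    using k(2) kclass_seq_mem_Lset_iff[OF x] kx by auto
  obtain g where g: "\<And>n. g n \<in> carrier (EN n)" and cg: "compatible g"
    and ne: "\<And>n. n \<ge> n0 \<Longrightarrow> comm_prod n (x n) (g n) \<noteq> \<one>"
    using exists_compatible_noncommuting[OF x cx n0] by blast
  define h where "h = (\<lambda>n. kclass n (g n))"
  have hK: "h \<in> Kset E p"
    using Kset_iff[OF g] cg by (simp add: h_def)
  have kc: "k \<in> carrier KP" and hc: "h \<in> carrier KP"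
    using k(1) hK subgroup.subset[OF Kset_subgroup] by blast+
  have "hclass k \<in> carrier H" "hclass h \<in> carrier H"
    using k(1) hK by (simp_all add: Hgrp_carrier)
  then have "commutator H (hclass k) (hclass h) = \<one>\<^bsub>H\<^esub>"
    using group.commutator_eq_one_iff[OF Hgrp_group] group.center_commute[OF Hgrp_group central]
    by simp
  then have "commutator KP k h \<in> D"
    using hclass_eq_one_iff Lset_subset_Kset commutator_Kprod_mem_Lset[OF kc hc] commutator_hclass[OF k(1) hK]
    by auto
  then have "support (commutator KP k h) \<notin> U"
    by (simp add: Dset_iff)
  moreover have "commutator KP k h n = commutator (KN n) (kclass n (x n)) (kclass n (g n))" for n
    using commutator_Kprod[OF kc hc] by (simp add: kx h_def)
  then have "{n0..} \<subseteq> support (commutator KP k h)"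
    using ne commutator_kclass_eq_one_iff[OF x g] by (auto simp: support_def)
  moreover have "{n0..} \<in> U"
    by (rule cofinite_mem) simp
  ultimately show False
    using mem_mono by blast
qed

lemma center_Hgrp: "center H = hclass ` Lset E p"
proof
  show "center H \<subseteq> hclass ` Lset E p"
  proof
    fix c assume c: "c \<in> center H"
    then obtain k where "k \<in> Kset E p" "c = hclass k"
      using group.center_subset_carrier[OF Hgrp_group] by (auto simp: Hgrp_carrier)
    then show "c \<in> hclass ` Lset E p"
      using c hclass_not_central by blast
  qed
qed (auto intro: hclass_Lset_central)

lemma Hgrp_commutator_center:
  assumes "a \<in> carrier H" "b \<in> carrier H"
  shows "commutator H a b \<in> center H"
proof -
  obtain k h where k: "k \<in> Kset E p" "a = hclass k" and h: "h \<in> Kset E p" "b = hclass h"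
    using assms by (auto simp: Hgrp_carrier)
  then have "commutator KP k h \<in> Lset E p"
    using commutator_Kprod_mem_Lset subgroup.subset[OF Kset_subgroup] by blast
  then show ?thesis
    using k h by (simp add: commutator_hclass center_Hgrp)
qed

end

section \<open>The centre of \<open>H\<close> as a copy of \<open>Z(E)\<close>\<close>

context tower_ultrapower
begin

abbreviation "ZE \<equiv> E\<lparr>carrier := center E\<rparr>"

lemma ZE_group: "group ZE"
  by (rule subgroup.subgroup_is_group[OF center_subgroup is_group])

definition center_seq :: "'a \<Rightarrow> nat \<Rightarrow> (nat \<Rightarrow> 'a) set" where
  "center_seq c = (\<lambda>n. kclass n (single n 0 c))"

definition center_emb :: "'a \<Rightarrow> (nat \<Rightarrow> (nat \<Rightarrow> 'a) set) set" where
  "center_emb c = hclass (center_seq c)"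

lemma center_seq_Lset: "c \<in> center E \<Longrightarrow> center_seq c \<in> Lset E p"
  using kclass_seq_mem_Lset_iff[of "\<lambda>n. single n 0 c"] single_zero_Zn Zn_closed
  by (simp add: center_seq_def)

lemma center_seq_Kset: "c \<in> center E \<Longrightarrow> center_seq c \<in> Kset E p"
  using center_seq_Lset Lset_subset_Kset by blast

lemma support_center_seq: "c \<in> center E \<Longrightarrow> support (center_seq c) = {n. c \<noteq> \<one>}"
  using kclass_eq_one_iff[OF single_zero_Zn] coord_prod_single_zero center_subset_carrier
  by (auto simp: support_def center_seq_def)

lemma center_emb_hom: "group_hom ZE H center_emb"
proof (intro group_hom.intro group_hom_axioms.intro homI)
  show "group ZE"
    by (rule ZE_group)
  show "group H"
    by (rule Hgrp_group)
  show "center_emb c \<in> carrier H" if "c \<in> carrier ZE" for c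
    using that by (simp add: center_emb_def Hgrp_carrier center_seq_Kset)
  show "center_emb (c \<otimes>\<^bsub>ZE\<^esub> d) = center_emb c \<otimes>\<^bsub>H\<^esub> center_emb d"
    if "c \<in> carrier ZE" "d \<in> carrier ZE" for c d
  proof -
    have cd: "c \<in> center E" "d \<in> center E" "c \<in> carrier E" "d \<in> carrier E"
      using that center_subset_carrier by auto
    then have "center_seq (c \<otimes> d) = center_seq c \<otimes>\<^bsub>KP\<^esub> center_seq d"
      using kclass_seq_mult[of "\<lambda>n. single n 0 c" "\<lambda>n. single n 0 d"] single_closed
      by (simp add: center_seq_def single_zero_mult)
    then show ?thesis
      using cd by (simp add: center_emb_def hclass_mult center_seq_Kset)
  qed
qed

lemma center_emb_inj: "inj_on center_emb (center E)"
proof -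
  interpret center_emb: group_hom ZE H center_emb
    by (rule center_emb_hom)
  have trivial: "c = \<one>" if c: "c \<in> center E" "center_emb c = \<one>\<^bsub>H\<^esub>" for c
  proof (rule ccontr)
    assume "c \<noteq> \<one>"
    then have "support (center_seq c) \<in> U"
      using c(1) UNIV_mem by (simp add: support_center_seq)
    moreover have "center_seq c \<in> D"
      using c hclass_eq_one_iff[OF center_seq_Kset[OF c(1)]] by (simp add: center_emb_def)
    ultimately show False
      by (simp add: Dset_iff)
  qed
  have "\<one> \<in> kernel ZE H center_emb"
    using center_emb.hom_one subgroup.one_closed[OF center_subgroup] by (simp add: kernel_def)
  then have "kernel ZE H center_emb = {\<one>}"
    using trivial unfolding kernel_def by auto
  then show ?thesis
    using center_emb.trivial_ker_imp_inj by simp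
qed

text \<open>Modulo \<open>D\<close>, an element of \<open>L\<close> agrees with the constant sequence of the value that its
  coordinate products take on a set in \<open>U\<close>; there is one, as they take only finitely many values.\<close>

lemma Lset_congruent_center_seq:
  assumes fin: "finite (center E)" and l: "l \<in> Lset E p"
  obtains c where "c \<in> center E" "l \<otimes>\<^bsub>KP\<^esub> inv\<^bsub>KP\<^esub> center_seq c \<in> D"
proof -
  obtain z where z: "\<And>n. z n \<in> ZN n" and lz: "l = (\<lambda>n. kclass n (z n))"
    using Lset_obtain_rep[OF l] by blast
  have "(\<Union>c\<in>center E. {n. coord_prod n (z n) = c}) = UNIV"
    using coord_prod_center[OF z] by blast
  then obtain c where c: "c \<in> center E" and cU: "{n. coord_prod n (z n) = c} \<in> U"
    using finite_Union_mem[of "(\<lambda>c. {n. coord_prod n (z n) = c}) ` center E"] fin UNIV_mem by auto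
  define w where "w n = z n \<otimes>\<^bsub>EN n\<^esub> inv\<^bsub>EN n\<^esub> single n 0 c" for n
  have w: "w n \<in> ZN n" for n
    unfolding w_def using z single_zero_Zn[OF c] subgroup.m_closed[OF Zn_subgroup] subgroup.m_inv_closed[OF Zn_subgroup]
    by blast
  have s: "\<And>n. single n 0 c \<in> carrier (EN n)" and si: "\<And>n. inv\<^bsub>EN n\<^esub> single n 0 c \<in> carrier (EN n)"
    using Zn_closed[OF single_zero_Zn[OF c]] group.inv_closed[OF En_group] by blast+
  have lw: "l \<otimes>\<^bsub>KP\<^esub> inv\<^bsub>KP\<^esub> center_seq c = (\<lambda>n. kclass n (w n))"
    unfolding lz center_seq_def w_def kclass_seq_inv[OF s] by (rule kclass_seq_mult[OF Zn_closed[OF z] si])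
  have "coord_prod n (w n) = coord_prod n (z n) \<otimes> inv c" for n
    unfolding w_def by (rule coord_prod_div_single_zero[OF z c])
  then have "support (l \<otimes>\<^bsub>KP\<^esub> inv\<^bsub>KP\<^esub> center_seq c) \<subseteq> - {n. coord_prod n (z n) = c}"
    using kclass_eq_one_iff[OF w] c center_subset_carrier by (auto simp: support_def lw)
  then have "support (l \<otimes>\<^bsub>KP\<^esub> inv\<^bsub>KP\<^esub> center_seq c) \<notin> U"
    using Compl_not_mem[OF cU] mem_mono by blast
  moreover have "l \<otimes>\<^bsub>KP\<^esub> inv\<^bsub>KP\<^esub> center_seq c \<in> Lset E p"
    using kclass_seq_mem_Lset_iff[of w] w Zn_closed by (simp add: lw)
  ultimately show ?thesis
    using that c by (simp add: Dset_iff)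
qed

lemma center_emb_image:
  assumes fin: "finite (center E)"
  shows "center_emb ` center E = center H"
proof
  show "center_emb ` center E \<subseteq> center H"
    using center_seq_Lset by (auto simp: center_emb_def center_Hgrp)
  show "center H \<subseteq> center_emb ` center E"
  proof
    fix t assume "t \<in> center H"
    then obtain l where l: "l \<in> Lset E p" and t: "t = hclass l"
      by (auto simp: center_Hgrp)
    obtain c where c: "c \<in> center E" "l \<otimes>\<^bsub>KP\<^esub> inv\<^bsub>KP\<^esub> center_seq c \<in> D"
      using Lset_congruent_center_seq[OF fin l] by blast
    have "l \<in> carrier KP" "center_seq c \<in> carrier KP"
      using l center_seq_Lset[OF c(1)] subgroup.subset[OF Lset_subgroup] by blast+
    then have "D #>\<^bsub>KP\<^esub> l = D #>\<^bsub>KP\<^esub> center_seq c"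
      using group.rcos_eq_iff[OF Kprod_group Dset_subgroup] c(2) by blast
    then have "hclass l = center_emb c"
      by (simp add: center_emb_def hclass_def)
    then show "t \<in> center_emb ` center E"
      using c t by blast
  qed
qed

lemma Zgrp_iso_center:
  assumes fin: "finite (center E)"
  shows "Zgrp E p U \<cong> ZE"
proof -
  interpret center_emb: group_hom ZE H center_emb
    by (rule center_emb_hom)
  have "center_emb \<in> hom ZE (H\<lparr>carrier := center H\<rparr>)"
    using center_emb_image[OF fin] center_emb.hom_mult by (intro homI) auto
  moreover have "bij_betw center_emb (center E) (center H)"
    using center_emb_inj center_emb_image[OF fin] by (simp add: bij_betw_def)
  ultimately have "ZE \<cong> H\<lparr>carrier := center H\<rparr>"
    by (intro is_isoI isoI) simp_all
  then show ?thesis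
    unfolding Zgrp_eq center_Hgrp[symmetric]
    by (rule group.iso_sym[OF ZE_group])
qed

lemma Hgrp_monolithic:
  assumes fin: "finite (center E)" and w: "w \<in> center E" "w \<noteq> \<one>"
    and powers: "\<And>c. c \<in> center E \<Longrightarrow> c \<noteq> \<one> \<Longrightarrow> \<exists>e::int. c [^] e = w"
  shows "monolithic H"
proof (rule group.monolithicI_center_powers[OF Hgrp_group Hgrp_commutator_center])
  interpret center_emb: group_hom ZE H center_emb
    by (rule center_emb_hom)
  show "center_emb w \<in> center H"
    using center_emb_image[OF fin] w by blast
  have one: "center_emb \<one> = \<one>\<^bsub>H\<^esub>"
    using center_emb.hom_one by simp
  then show "center_emb w \<noteq> \<one>\<^bsub>H\<^esub>"
    using w inj_onD[OF center_emb_inj _ w(1) subgroup.one_closed[OF center_subgroup]] by auto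
  fix t assume t: "t \<in> center H" "t \<noteq> \<one>\<^bsub>H\<^esub>"
  then obtain c where c: "c \<in> center E" "t = center_emb c"
    using center_emb_image[OF fin] by blast
  then have "c \<noteq> \<one>"
    using t one by blast
  then obtain e :: int where "c [^] e = w"
    using powers c by blast
  then have "c [^]\<^bsub>ZE\<^esub> e = w"
    using int_pow_consistent[OF center_subgroup c(1)] by simp
  then have "center_emb w = t [^]\<^bsub>H\<^esub> e"
    using center_emb.hom_int_pow[of c e] c by simp
  then show "\<exists>e::int. t [^]\<^bsub>H\<^esub> e = center_emb w"
    by (intro exI[of _ e]) simp
qed

end

theorem theorem4p4:
  fixes E :: "('a, 'b) monoid_scheme" and p :: nat and U :: "nat set set"
  assumes "group E"
    and "p_group p E"
    and "\<not> comm_group E"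
    and "class_le_2 E"
    and "cyclic_group (E\<lparr>carrier := center E\<rparr>)"
    and "ultrafilter_on UNIV U"
    and "nonprincipal_on UNIV U"
  shows "Zgrp E p U \<cong> E\<lparr>carrier := center E\<rparr>
         \<and> monolithic (Hgrp E p U)
         \<and> center (Hgrp E p U) = carrier (Zgrp E p U)"
proof -
  interpret E: group E
    by (rule assms(1))
  have p: "Factorial_Ring.prime p" and fin: "finite (center E)"
    using assms(2) E.center_subset_carrier finite_subset by (auto simp: p_group_def)
  interpret tower_ultrapower E p U
    using assms(1,6,7) E.class_le_2_commutator_center[OF assms(4)] prime_gt_0_nat[OF p]
    by (intro tower_ultrapower.intro tower.intro class2_group.intro class2_group_axioms.intro
        tower_axioms.intro nonprincipal_ultrafilter.intro) simp_all
  obtain w where w: "w \<in> center E" "w \<noteq> \<one>\<^bsub>E\<^esub>"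
    "\<And>c. c \<in> center E \<Longrightarrow> c \<noteq> \<one>\<^bsub>E\<^esub> \<Longrightarrow> \<exists>e::int. c [^]\<^bsub>E\<^esub> e = w"
    using E.center_powers_of_p_group[OF assms(2-5)] by blast
  show ?thesis
    using Zgrp_iso_center[OF fin] Hgrp_monolithic[OF fin w] center_Hgrp Zgrp_carrier by simp
qed

end
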